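(* Let $\Gamma\in\mathbb{N}$ and let $h\in C^1([-\Gamma,\Gamma])$ be real-valued with $h'$ Lipschitz and $h(0)=0$. Then there is a constant $C>0$, depending only on $h$ and $\Gamma$, such that the following holds. Let $G_1,G_2$ be graphs with $n_1$ and $n_2$ nodes, GSOs $\mathbf{\Delta}_1\in\mathbb{R}^{n_1\times n_1}$, $\mathbf{\Delta}_2\in\mathbb{R}^{n_2\times n_2}$ and GWMs $\boldsymbol{A}_1,\boldsymbol{A}_2$ with $\|\boldsymbol{A}_1\|_{\mathbb{C}^{n_1}\to\mathbb{C}^{n_1}}\le\Gamma$ and $\|\boldsymbol{A}_2\|_{\mathbb{C}^{n_2}\to\mathbb{C}^{n_2}}\le\Gamma$. Then for all permutations $\pi_1,\pi_2$ of the node sets, $$\|T_{W_{n_1h(\pi_1(\mathbf{\Delta}_1))}}-T_{W_{n_2h(\pi_2(\mathbf{\Delta}_2))}}\|_{L^2[0,1]\to L^2[0,1]}\le C\,\|T_{W_{\pi_1(\boldsymbol{A}_1)}}-T_{W_{\pi_2(\boldsymbol{A}_2)}}\|_{L^2[0,1]\to L^2[0,1]}.$$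
   Context: A graph with GSO is $G=(V,E,\mathbf{\Delta})$, $V=\{1,\dots,n\}$, $\mathbf{\Delta}\in\mathbb{R}^{n\times n}$ symmetric; GWM $\boldsymbol{A}=n\mathbf{\Delta}$. $h(\mathbf{\Delta})$ is functional calculus via an orthonormal eigendecomposition (the eigenvalues of $\mathbf{\Delta}$ lie in $[-\Gamma,\Gamma]$ under the hypotheses). For a permutation $\pi$, $\pi(\boldsymbol{B})=(\boldsymbol{B}_{\pi(i)\pi(j)})_{ij}$. With $P_k=[(k-1)/n,k/n)$, $W_{\boldsymbol{B}}(u,v)=\sum_{i,j}\boldsymbol{B}_{ij}\chi_{P_i}(u)\chi_{P_j}(v)$ for $\boldsymbol{B}\in\mathbb{R}^{n\times n}$, and $T_W\psi(v)=\int_0^1W(v,u)\psi(u)du$ on $L^2[0,1]$. *)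

theory Defs
  imports "HOL-Analysis.Analysis"
begin

text \<open>Square matrices of size n are represented as functions nat \<Rightarrow> nat \<Rightarrow> real;
  only the entries with indices < n are relevant (nodes are 0,...,n-1).\<close>

definition sym_mat :: "nat \<Rightarrow> (nat \<Rightarrow> nat \<Rightarrow> real) \<Rightarrow> bool" where
  "sym_mat n B \<longleftrightarrow> (\<forall>i<n. \<forall>j<n. B i j = B j i)"

definition orth_eigendecomp ::
  "nat \<Rightarrow> (nat \<Rightarrow> nat \<Rightarrow> real) \<Rightarrow> (nat \<Rightarrow> nat \<Rightarrow> real) \<Rightarrow> (nat \<Rightarrow> real) \<Rightarrow> bool" where
  "orth_eigendecomp n B U lam \<longleftrightarrow>
     (\<forall>i<n. \<forall>j<n. (\<Sum>k<n. U k i * U k j) = (if i = j then 1 else 0)) \<and>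
     (\<forall>i<n. \<forall>j<n. B i j = (\<Sum>k<n. lam k * U i k * U j k))"

definition mat_fun :: "(real \<Rightarrow> real) \<Rightarrow> nat \<Rightarrow> (nat \<Rightarrow> nat \<Rightarrow> real) \<Rightarrow> (nat \<Rightarrow> nat \<Rightarrow> real)" where
  "mat_fun h n B =
     (let (U, lam) = (SOME (U, lam). orth_eigendecomp n B U lam)
      in (\<lambda>i j. if i < n \<and> j < n then (\<Sum>k<n. h (lam k) * U i k * U j k) else 0))"

definition mat_opnorm :: "nat \<Rightarrow> (nat \<Rightarrow> nat \<Rightarrow> real) \<Rightarrow> real" where
  "mat_opnorm n B =
     (SUP x \<in> {x :: nat \<Rightarrow> complex. (\<Sum>i<n. (cmod (x i))\<^sup>2) \<le> 1}.
        sqrt (\<Sum>i<n. (cmod (\<Sum>j<n. complex_of_real (B i j) * x j))\<^sup>2))"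

definition perm_mat :: "(nat \<Rightarrow> nat) \<Rightarrow> (nat \<Rightarrow> nat \<Rightarrow> real) \<Rightarrow> (nat \<Rightarrow> nat \<Rightarrow> real)" where
  "perm_mat \<pi> B = (\<lambda>i j. B (\<pi> i) (\<pi> j))"

definition scale_mat :: "real \<Rightarrow> (nat \<Rightarrow> nat \<Rightarrow> real) \<Rightarrow> (nat \<Rightarrow> nat \<Rightarrow> real)" where
  "scale_mat c B = (\<lambda>i j. c * B i j)"

text \<open>Interval P_k (0-based: node k corresponds to [k/n,(k+1)/n)).\<close>
definition part_int :: "nat \<Rightarrow> nat \<Rightarrow> real set" where
  "part_int n k = {real k / real n ..< real (Suc k) / real n}"

definition step_graphon :: "nat \<Rightarrow> (nat \<Rightarrow> nat \<Rightarrow> real) \<Rightarrow> real \<Rightarrow> real \<Rightarrow> real" where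
  "step_graphon n B u v =
     (\<Sum>i<n. \<Sum>j<n. B i j * indicator (part_int n i) u * indicator (part_int n j) v)"

definition int_op :: "(real \<Rightarrow> real \<Rightarrow> real) \<Rightarrow> (real \<Rightarrow> real) \<Rightarrow> real \<Rightarrow> real" where
  "int_op W \<psi> v = (LINT u:{0..1}|lborel. W v u * \<psi> u)"

definition L2_0_1 :: "(real \<Rightarrow> real) set" where
  "L2_0_1 = {\<psi>. \<psi> \<in> borel_measurable lborel \<and> set_integrable lborel {0..1} (\<lambda>x. (\<psi> x)\<^sup>2)}"

definition L2_norm :: "(real \<Rightarrow> real) \<Rightarrow> real" where
  "L2_norm f = sqrt (LINT x:{0..1}|lborel. (f x)\<^sup>2)"

definition L2_opnorm :: "((real \<Rightarrow> real) \<Rightarrow> (real \<Rightarrow> real)) \<Rightarrow> real" where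
  "L2_opnorm T = (SUP \<psi> \<in> {\<psi> \<in> L2_0_1. L2_norm \<psi> \<le> 1}. L2_norm (T \<psi>))"

definition op_diff :: "((real \<Rightarrow> real) \<Rightarrow> (real \<Rightarrow> real)) \<Rightarrow> ((real \<Rightarrow> real) \<Rightarrow> (real \<Rightarrow> real))
    \<Rightarrow> ((real \<Rightarrow> real) \<Rightarrow> (real \<Rightarrow> real))" where
  "op_diff S T = (\<lambda>\<psi> v. S \<psi> v - T \<psi> v)"

end

theory Submission
  imports Defs "Jordan_Normal_Form.Char_Poly"
begin

text \<open>
  Refine both step graphons to the common partition of \<open>[0,1]\<close> into \<open>N = n\<^sub>1 n\<^sub>2\<close> cells.
  On \<open>N\<close> cells the integral operator of the step graphon of \<open>N K\<close> acts as the matrix \<open>K\<close>,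
  so both sides become Euclidean operator norms of \<open>N \<times> N\<close> matrices. Diagonalising the
  permuted GSOs gives \<open>A = \<Sum>\<^sub>k \<lambda>\<^sub>k u\<^sub>k u\<^sub>k\<^sup>T\<close> and \<open>B = \<Sum>\<^sub>l \<mu>\<^sub>l v\<^sub>l v\<^sub>l\<^sup>T\<close> with orthonormal
  families; every eigenvalue is at most \<open>\<Gamma>/n\<close> in modulus, so \<open>\<Sum>\<^sub>k \<lambda>\<^sub>k\<^sup>2 \<le> \<Gamma>\<^sup>2\<close>.

  Write \<open>h x = h'(0) x + g x\<close>; the Lipschitz bound on \<open>h'\<close> gives
  \<open>|g x - g y| \<le> L max |x| |y| |x - y|\<close>. The squared Hilbert--Schmidt norm of \<open>g(A) - g(B)\<close> is
  \<open>\<Sum>\<^sub>k\<^sub>,\<^sub>l (g \<lambda>\<^sub>k - g \<mu>\<^sub>l)\<^sup>2 \<langle>u\<^sub>k,v\<^sub>l\<rangle>\<^sup>2\<close> plus two Bessel defects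
  \<open>\<Sum>\<^sub>k (g \<lambda>\<^sub>k)\<^sup>2 (1 - \<Sum>\<^sub>l \<langle>u\<^sub>k,v\<^sub>l\<rangle>\<^sup>2)\<close> and its mirror image. Bessel's inequality applied to
  \<open>(A - B) u\<^sub>k\<close> and \<open>(A - B) v\<^sub>l\<close> bounds \<open>\<Sum>\<^sub>l ((\<lambda>\<^sub>k - \<mu>\<^sub>l) \<langle>u\<^sub>k,v\<^sub>l\<rangle>)\<^sup>2\<close> and
  \<open>\<lambda>\<^sub>k\<^sup>2 (1 - \<Sum>\<^sub>l \<langle>u\<^sub>k,v\<^sub>l\<rangle>\<^sup>2)\<close> by \<open>\<parallel>A - B\<parallel>\<^sup>2\<close>, and summing against the weights \<open>L\<^sup>2 \<lambda>\<^sub>k\<^sup>2\<close>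
  gives \<open>\<parallel>g(A) - g(B)\<parallel>\<^sub>H\<^sub>S \<le> 2 L \<Gamma> \<parallel>A - B\<parallel>\<close>. Hence
  \<open>\<parallel>h(A) - h(B)\<parallel> \<le> (|h'(0)| + 2 L \<Gamma>) \<parallel>A - B\<parallel>\<close>.
\<close>

section \<open>Spectral theorem for real symmetric matrices\<close>

definition mat_mul ::
  "nat \<Rightarrow> (nat \<Rightarrow> nat \<Rightarrow> real) \<Rightarrow> (nat \<Rightarrow> nat \<Rightarrow> real) \<Rightarrow> (nat \<Rightarrow> nat \<Rightarrow> real)" where
  "mat_mul m A B = (\<lambda>i j. \<Sum>k<m. A i k * B k j)"

definition mat_transpose :: "(nat \<Rightarrow> nat \<Rightarrow> real) \<Rightarrow> (nat \<Rightarrow> nat \<Rightarrow> real)" where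
  "mat_transpose A = (\<lambda>i j. A j i)"

definition mat_id :: "nat \<Rightarrow> nat \<Rightarrow> real" where
  "mat_id = (\<lambda>i j. if i = j then 1 else 0)"

definition diag_matrix :: "(nat \<Rightarrow> real) \<Rightarrow> nat \<Rightarrow> nat \<Rightarrow> real" where
  "diag_matrix lam = (\<lambda>i j. if i = j then lam i else 0)"

definition mat_eq_on :: "nat \<Rightarrow> (nat \<Rightarrow> nat \<Rightarrow> real) \<Rightarrow> (nat \<Rightarrow> nat \<Rightarrow> real) \<Rightarrow> bool" where
  "mat_eq_on m A B \<longleftrightarrow> (\<forall>i<m. \<forall>j<m. A i j = B i j)"

lemma mat_eq_on_refl [simp]: "mat_eq_on m A A"
  by (simp add: mat_eq_on_def)

lemma mat_eq_on_sym: "mat_eq_on m A B \<Longrightarrow> mat_eq_on m B A"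
  by (simp add: mat_eq_on_def)

lemma mat_eq_on_trans [trans]: "mat_eq_on m A B \<Longrightarrow> mat_eq_on m B C \<Longrightarrow> mat_eq_on m A C"
  by (simp add: mat_eq_on_def)

lemma mat_eq_on_mat_mul:
  "mat_eq_on m A A' \<Longrightarrow> mat_eq_on m B B' \<Longrightarrow> mat_eq_on m (mat_mul m A B) (mat_mul m A' B')"
  unfolding mat_eq_on_def mat_mul_def by auto

lemma mat_mul_assoc: "mat_mul m (mat_mul m A B) C = mat_mul m A (mat_mul m B C)"
proof (intro ext)
  fix i j
  have "mat_mul m (mat_mul m A B) C i j = (\<Sum>k<m. \<Sum>l<m. A i l * B l k * C k j)"
    unfolding mat_mul_def by (simp add: sum_distrib_right)
  also have "\<dots> = (\<Sum>l<m. \<Sum>k<m. A i l * B l k * C k j)"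
    by (rule sum.swap)
  also have "\<dots> = mat_mul m A (mat_mul m B C) i j"
    unfolding mat_mul_def by (simp add: sum_distrib_left mult.assoc)
  finally show "mat_mul m (mat_mul m A B) C i j = mat_mul m A (mat_mul m B C) i j" .
qed

lemma mat_transpose_mat_mul:
  "mat_transpose (mat_mul m A B) = mat_mul m (mat_transpose B) (mat_transpose A)"
  unfolding mat_mul_def mat_transpose_def by (intro ext) (simp add: mult.commute)

lemma sum_delta_mult_left: "i < (m::nat) \<Longrightarrow> (\<Sum>k<m. (if i = k then 1 else 0) * f k) = (f i :: real)"
  by (subst sum.cong[OF refl, where h = "\<lambda>k. if i = k then f k else 0"]) auto

lemma sum_delta_mult_right: "j < (m::nat) \<Longrightarrow> (\<Sum>k<m. f k * (if k = j then 1 else 0)) = (f j :: real)"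
  by (simp add: if_distrib cong: if_cong)

lemma mat_mul_id_left: "mat_eq_on m (mat_mul m mat_id A) A"
  unfolding mat_eq_on_def mat_mul_def mat_id_def by (auto simp: sum_delta_mult_left)

lemma mat_mul_id_right: "mat_eq_on m (mat_mul m A mat_id) A"
  unfolding mat_eq_on_def mat_mul_def mat_id_def by (auto simp: sum_delta_mult_right)

lemma mat_mul_diag_transpose:
  "mat_mul m (mat_mul m U (diag_matrix lam)) (mat_transpose U) i j = (\<Sum>k<m. lam k * U i k * U j k)"
proof -
  have "mat_mul m U (diag_matrix lam) i k = U i k * lam k" if "k < m" for k
    using that unfolding mat_mul_def diag_matrix_def by (simp add: if_distrib cong: if_cong)
  thus ?thesis
    unfolding mat_mul_def[of m "mat_mul m U (diag_matrix lam)"] mat_transpose_def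
    by (intro sum.cong refl) (simp add: mult.commute mult.left_commute)
qed

lemma orth_eigendecomp_iff:
  "orth_eigendecomp n B U lam \<longleftrightarrow>
     mat_eq_on n (mat_mul n (mat_transpose U) U) mat_id \<and>
     mat_eq_on n B (mat_mul n (mat_mul n U (diag_matrix lam)) (mat_transpose U))"
  unfolding orth_eigendecomp_def mat_eq_on_def mat_mul_diag_transpose
  by (simp add: mat_mul_def mat_transpose_def mat_id_def)

lemma complex_eigenvector_exists:
  fixes B :: "nat \<Rightarrow> nat \<Rightarrow> real"
  assumes "0 < n"
  shows "\<exists>(e::complex) v. (\<exists>i<n. v i \<noteq> 0) \<and>
           (\<forall>i<n. (\<Sum>j<n. complex_of_real (B i j) * v j) = e * v i)"
proof -
  define M where "M = mat n n (\<lambda>(i,j). complex_of_real (B i j))"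
  have M: "M \<in> carrier_mat n n"
    unfolding M_def by simp
  have "degree (char_poly M) = n"
    using degree_monic_char_poly[OF M] by simp
  hence "\<not> constant (poly (char_poly M))"
    using assms by (simp add: constant_degree)
  then obtain e where "poly (char_poly M) e = 0"
    using fundamental_theorem_of_algebra by blast
  hence "eigenvalue M e"
    using eigenvalue_root_char_poly[OF M] by simp
  then obtain v where "eigenvector M v e"
    unfolding eigenvalue_def by blast
  hence v: "v \<in> carrier_vec n" and v0: "v \<noteq> 0\<^sub>v n" and Mv: "M *\<^sub>v v = e \<cdot>\<^sub>v v"
    using M unfolding eigenvector_def by auto
  have "\<exists>i<n. v $ i \<noteq> 0"
  proof (rule ccontr)
    assume "\<not> ?thesis"
    hence "v = 0\<^sub>v n"
      using v by (intro eq_vecI) auto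
    with v0 show False by simp
  qed
  moreover have "(\<Sum>j<n. complex_of_real (B i j) * v $ j) = e * v $ i" if i: "i < n" for i
  proof -
    have "(M *\<^sub>v v) $ i = (\<Sum>j<n. complex_of_real (B i j) * v $ j)"
      using i v unfolding M_def by (simp add: scalar_prod_def atLeast0LessThan)
    thus ?thesis
      using Mv i v by simp
  qed
  ultimately show ?thesis by blast
qed

lemma sym_mat_eigenvalue_real:
  fixes B :: "nat \<Rightarrow> nat \<Rightarrow> real"
  assumes sym: "sym_mat n B" and v: "\<exists>i<n. v i \<noteq> 0"
    and ev: "\<And>i. i < n \<Longrightarrow> (\<Sum>j<n. complex_of_real (B i j) * v j) = e * v i"
  shows "Im e = 0"
proof -
  define S where "S = (\<Sum>i<n. cnj (v i) * (\<Sum>j<n. complex_of_real (B i j) * v j))"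
  define s where "s = (\<Sum>i<n. (cmod (v i))\<^sup>2)"
  have "S = (\<Sum>i<n. e * (v i * cnj (v i)))"
    unfolding S_def by (intro sum.cong refl) (simp add: ev)
  also have "\<dots> = e * complex_of_real s"
    by (simp only: s_def complex_norm_square of_real_sum sum_distrib_left)
  finally have S_eq: "S = e * complex_of_real s" .
  have "cnj S = (\<Sum>i<n. \<Sum>j<n. complex_of_real (B i j) * v i * cnj (v j))"
    unfolding S_def by (simp add: cnj_sum sum_distrib_left mult.commute mult.left_commute)
  also have "\<dots> = (\<Sum>j<n. \<Sum>i<n. complex_of_real (B j i) * v i * cnj (v j))"
    using sym unfolding sym_mat_def by (subst sum.swap) (intro sum.cong refl, auto)
  also have "\<dots> = S"
    unfolding S_def by (simp add: sum_distrib_left mult.commute mult.left_commute)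
  finally have "Im (cnj S) = Im S"
    by simp
  hence "Im S = 0"
    by simp
  moreover have "s > 0"
  proof -
    obtain i where i: "i < n" "v i \<noteq> 0"
      using v by blast
    have "(cmod (v i))\<^sup>2 \<le> s"
      unfolding s_def by (rule member_le_sum) (use i in auto)
    thus ?thesis
      using i by (smt (verit) zero_less_power2 norm_eq_zero)
  qed
  ultimately show ?thesis
    using S_eq by simp
qed

lemma eigenvector_normalize:
  fixes B :: "nat \<Rightarrow> nat \<Rightarrow> real"
  assumes y: "\<exists>i<n. y i \<noteq> 0" and ev: "\<And>i. i < n \<Longrightarrow> (\<Sum>j<n. B i j * y j) = lam * y i"
  shows "\<exists>x. (\<Sum>i<n. (x i)\<^sup>2) = 1 \<and> (\<forall>i<n. (\<Sum>j<n. B i j * x j) = lam * x i)"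
proof -
  define t where "t = (\<Sum>i<n. (y i)\<^sup>2)"
  have "t > 0"
  proof -
    obtain i where i: "i < n" "y i \<noteq> 0"
      using y by blast
    have "(y i)\<^sup>2 \<le> t"
      unfolding t_def by (rule member_le_sum) (use i in auto)
    thus ?thesis
      using i by (smt (verit) zero_less_power2)
  qed
  define x where "x i = y i / sqrt t" for i
  have "(\<Sum>i<n. (x i)\<^sup>2) = t / t"
    unfolding x_def t_def using \<open>t > 0\<close> by (simp add: power_divide sum_divide_distrib[symmetric] sum_nonneg)
  moreover have "(\<Sum>j<n. B i j * x j) = lam * x i" if "i < n" for i
    using ev[OF that] unfolding x_def by (simp add: sum_divide_distrib[symmetric])
  ultimately show ?thesis
    using \<open>t > 0\<close> by auto
qed

lemma sym_mat_unit_eigenvector: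
  fixes B :: "nat \<Rightarrow> nat \<Rightarrow> real"
  assumes "0 < n" and sym: "sym_mat n B"
  shows "\<exists>x lam. (\<Sum>i<n. (x i)\<^sup>2) = 1 \<and> (\<forall>i<n. (\<Sum>j<n. B i j * x j) = lam * x i)"
proof -
  obtain e v where v: "\<exists>i<n. v i \<noteq> 0"
    and ev: "\<And>i. i < n \<Longrightarrow> (\<Sum>j<n. complex_of_real (B i j) * v j) = e * v i"
    using complex_eigenvector_exists[OF \<open>0 < n\<close>, of B] by blast
  have "Im e = 0"
    using sym_mat_eigenvalue_real[OF sym v ev] .
  hence Re_ev: "(\<Sum>j<n. B i j * Re (v j)) = Re e * Re (v i)"
    and Im_ev: "(\<Sum>j<n. B i j * Im (v j)) = Re e * Im (v i)" if "i < n" for i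
    using arg_cong[OF ev[OF that], of Re] arg_cong[OF ev[OF that], of Im]
    by (simp_all add: Re_sum Im_sum)
  have "(\<exists>i<n. Re (v i) \<noteq> 0) \<or> (\<exists>i<n. Im (v i) \<noteq> 0)"
    using v complex_eqI by force
  thus ?thesis
    using eigenvector_normalize[of n "\<lambda>i. Re (v i)" B "Re e"]
      eigenvector_normalize[of n "\<lambda>i. Im (v i)" B "Re e"] Re_ev Im_ev by blast
qed

definition householder :: "nat \<Rightarrow> (nat \<Rightarrow> real) \<Rightarrow> nat \<Rightarrow> nat \<Rightarrow> real" where
  "householder m w = (\<lambda>i j. mat_id i j - 2 / (\<Sum>k<m. (w k)\<^sup>2) * w i * w j)"

lemma householder_transpose: "mat_transpose (householder m w) = householder m w"
  unfolding householder_def mat_transpose_def mat_id_def by (intro ext) auto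

lemma householder_orthogonal:
  "mat_eq_on m (mat_mul m (householder m w) (householder m w)) mat_id"
  unfolding mat_eq_on_def
proof (intro allI impI)
  fix i j assume i: "i < m" and j: "j < m"
  define s where "s = (\<Sum>k<m. (w k)\<^sup>2)"
  define c where "c = 2 / s"
  have Q: "householder m w = (\<lambda>i j. mat_id i j - c * w i * w j)"
    unfolding householder_def c_def s_def ..
  have "mat_mul m (householder m w) (householder m w) i j =
      (\<Sum>k<m. mat_id i k * mat_id k j) - (\<Sum>k<m. mat_id i k * (c * w k * w j))
      - (\<Sum>k<m. c * w i * w k * mat_id k j) + c * c * w i * w j * s"
    unfolding Q mat_mul_def s_def
    by (simp add: algebra_simps power2_eq_square sum.distrib sum_subtractf sum_distrib_left)
  also have "(\<Sum>k<m. mat_id i k * mat_id k j) = mat_id i j"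
    using sum_delta_mult_left[OF i, of "\<lambda>k. mat_id k j"] unfolding mat_id_def by simp
  also have "(\<Sum>k<m. mat_id i k * (c * w k * w j)) = c * w i * w j"
    using sum_delta_mult_left[OF i, of "\<lambda>k. c * w k * w j"] unfolding mat_id_def by simp
  also have "(\<Sum>k<m. c * w i * w k * mat_id k j) = c * w i * w j"
    using sum_delta_mult_right[OF j, of "\<lambda>k. c * w i * w k"] unfolding mat_id_def by simp
  also have "c * c * w i * w j * s = 2 * c * w i * w j"
    unfolding c_def by (cases "s = 0") (simp_all add: field_simps)
  finally show "mat_mul m (householder m w) (householder m w) i j = mat_id i j"
    by simp
qed

text \<open>For \<open>x = e\<^sub>0\<close> the vector \<open>w\<close> vanishes and, since \<open>2 / 0 = 0\<close>,
  the reflection degenerates to the identity, which still has first column \<open>x\<close>.\<close>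

lemma householder_first_column:
  assumes x: "(\<Sum>i<m. (x i)\<^sup>2) = 1" and m: "0 < m" and i: "i < m"
  shows "householder m (\<lambda>i. x i - mat_id i 0) i 0 = x i"
proof -
  define w where "w = (\<lambda>i. x i - mat_id i 0)"
  define s where "s = (\<Sum>i<m. (w i)\<^sup>2)"
  have s_eq: "s = 2 - 2 * x 0"
  proof -
    have "(w i)\<^sup>2 = (x i)\<^sup>2 - 2 * (x i * mat_id i 0) + mat_id i 0" for i
      unfolding w_def mat_id_def by (simp add: power2_eq_square algebra_simps)
    hence "s = (\<Sum>i<m. (x i)\<^sup>2) - 2 * (\<Sum>i<m. x i * mat_id i 0) + (\<Sum>i<m. mat_id i 0)"
      unfolding s_def by (simp add: sum.distrib sum_subtractf sum_distrib_left)
    thus ?thesis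
      using x m sum_delta_mult_right[OF m, of x] by (simp add: mat_id_def)
  qed
  show ?thesis
  proof (cases "s = 0")
    case True
    hence "w i = 0"
      using i unfolding s_def by (subst (asm) sum_nonneg_eq_0_iff) auto
    thus ?thesis
      unfolding w_def[symmetric] householder_def s_def[symmetric] using True
      by (simp add: w_def mat_id_def split: if_splits)
  next
    case False
    define c where "c = 2 / s"
    have "c * w 0 = -1"
      using False s_eq unfolding c_def w_def mat_id_def by (simp add: field_simps)
    moreover have "householder m w i 0 = mat_id i 0 - (c * w 0) * w i"
      unfolding householder_def s_def[symmetric] c_def by (simp add: algebra_simps)
    ultimately show ?thesis
      unfolding w_def[symmetric] by (simp add: w_def)
  qed
qed

lemma householder_deflates:
  assumes sym: "sym_mat m B" and m: "0 < m"
    and Qt: "mat_transpose Q = Q" and QQ: "mat_eq_on m (mat_mul m Q Q) mat_id"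
    and Q0: "\<And>i. i < m \<Longrightarrow> Q i 0 = x i"
    and ev: "\<And>i. i < m \<Longrightarrow> (\<Sum>j<m. B i j * x j) = lam0 * x i"
  defines "C \<equiv> mat_mul m (mat_mul m Q B) Q"
  shows "sym_mat m C" and "\<And>j. j < m \<Longrightarrow> C 0 j = (if j = 0 then lam0 else 0)"
proof -
  have Qsym: "Q i j = Q j i" for i j
    using fun_cong[OF fun_cong[OF Qt, of j], of i] unfolding mat_transpose_def .
  have "mat_eq_on m (mat_transpose B) B"
    using sym unfolding mat_eq_on_def sym_mat_def mat_transpose_def by auto
  hence "mat_eq_on m (mat_mul m (mat_mul m Q (mat_transpose B)) Q) C"
    unfolding C_def by (intro mat_eq_on_mat_mul) auto
  moreover have "mat_transpose C = mat_mul m (mat_mul m Q (mat_transpose B)) Q"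
    unfolding C_def by (simp add: mat_transpose_mat_mul Qt mat_mul_assoc)
  ultimately have "mat_eq_on m (mat_transpose C) C"
    by simp
  thus "sym_mat m C"
    unfolding sym_mat_def mat_eq_on_def mat_transpose_def by simp
  fix j assume j: "j < m"
  have "C 0 j = (\<Sum>k<m. (\<Sum>l<m. B k l * x l) * Q k j)"
    unfolding C_def mat_mul_def using sym unfolding sym_mat_def
    by (intro sum.cong refl) (simp add: Qsym[of 0] Q0 mult.commute)
  also have "\<dots> = (\<Sum>k<m. (lam0 * x k) * Q k j)"
    by (intro sum.cong refl) (simp add: ev)
  also have "\<dots> = lam0 * mat_mul m Q Q 0 j"
    unfolding mat_mul_def by (simp add: sum_distrib_left Q0 Qsym[of 0] mult.assoc)
  also have "\<dots> = lam0 * mat_id 0 j"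
    using QQ m j unfolding mat_eq_on_def by simp
  finally show "C 0 j = (if j = 0 then lam0 else 0)"
    unfolding mat_id_def by simp
qed

lemma orth_eigendecomp_Suc:
  assumes sym: "sym_mat (Suc n) C"
    and C0: "\<And>j. j < Suc n \<Longrightarrow> C 0 j = (if j = 0 then lam0 else 0)"
    and U': "orth_eigendecomp n (\<lambda>i j. C (Suc i) (Suc j)) U' lam'"
  shows "\<exists>V lam. orth_eigendecomp (Suc n) C V lam"
proof -
  define V where "V i j = (if i = 0 then mat_id 0 j else if j = 0 then 0 else U' (i - 1) (j - 1))"
    for i j
  define lam where "lam k = (if k = 0 then lam0 else lam' (k - 1))" for k
  have "(\<Sum>k<Suc n. V k i * V k j) = (if i = j then 1 else 0)" if "i < Suc n" "j < Suc n" for i j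
    using that U' unfolding orth_eigendecomp_def sum.lessThan_Suc_shift
    by (cases i; cases j) (auto simp: V_def mat_id_def)
  moreover have "C i j = (\<Sum>k<Suc n. lam k * V i k * V j k)" if "i < Suc n" "j < Suc n" for i j
    unfolding sum.lessThan_Suc_shift
  proof (cases i; cases j)
    fix i' j' assume "i = Suc i'" "j = Suc j'"
    thus "C i j = lam 0 * V i 0 * V j 0 + (\<Sum>k<n. lam (Suc k) * V i (Suc k) * V j (Suc k))"
      using that U' unfolding orth_eigendecomp_def by (auto simp: V_def lam_def)
  qed (use that C0 sym in \<open>auto simp: V_def lam_def mat_id_def sym_mat_def\<close>)
  ultimately show ?thesis
    unfolding orth_eigendecomp_def by blast
qed

lemma orth_eigendecomp_conj:
  assumes Qt: "mat_transpose Q = Q" and QQ: "mat_eq_on m (mat_mul m Q Q) mat_id"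
    and dec: "orth_eigendecomp m (mat_mul m (mat_mul m Q B) Q) V lam"
  shows "orth_eigendecomp m B (mat_mul m Q V) lam"
proof -
  define U where "U = mat_mul m Q V"
  have VV: "mat_eq_on m (mat_mul m (mat_transpose V) V) mat_id"
    and CV: "mat_eq_on m (mat_mul m (mat_mul m Q B) Q)
               (mat_mul m (mat_mul m V (diag_matrix lam)) (mat_transpose V))"
    using dec unfolding orth_eigendecomp_iff by auto
  have trU: "mat_transpose U = mat_mul m (mat_transpose V) Q"
    unfolding U_def by (simp add: mat_transpose_mat_mul Qt)
  have QQV: "mat_eq_on m (mat_mul m (mat_mul m Q Q) V) V"
    by (rule mat_eq_on_trans[OF mat_eq_on_mat_mul[OF QQ mat_eq_on_refl] mat_mul_id_left])
  have "mat_mul m (mat_transpose U) U = mat_mul m (mat_transpose V) (mat_mul m (mat_mul m Q Q) V)"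
    unfolding trU by (simp add: U_def mat_mul_assoc)
  hence "mat_eq_on m (mat_mul m (mat_transpose U) U) (mat_mul m (mat_transpose V) V)"
    using QQV by (simp add: mat_eq_on_mat_mul)
  hence UU: "mat_eq_on m (mat_mul m (mat_transpose U) U) mat_id"
    using VV mat_eq_on_trans by blast
  have "mat_eq_on m B (mat_mul m mat_id (mat_mul m B mat_id))"
    by (rule mat_eq_on_sym, rule mat_eq_on_trans[OF mat_mul_id_left mat_mul_id_right])
  also have "mat_eq_on m \<dots> (mat_mul m (mat_mul m Q Q) (mat_mul m B (mat_mul m Q Q)))"
    by (rule mat_eq_on_mat_mul[OF mat_eq_on_sym[OF QQ]
          mat_eq_on_mat_mul[OF mat_eq_on_refl mat_eq_on_sym[OF QQ]]])
  also have "mat_mul m (mat_mul m Q Q) (mat_mul m B (mat_mul m Q Q)) =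
      mat_mul m (mat_mul m Q (mat_mul m (mat_mul m Q B) Q)) Q"
    by (simp add: mat_mul_assoc)
  also have "mat_eq_on m \<dots>
      (mat_mul m (mat_mul m Q (mat_mul m (mat_mul m V (diag_matrix lam)) (mat_transpose V))) Q)"
    by (rule mat_eq_on_mat_mul[OF mat_eq_on_mat_mul[OF mat_eq_on_refl CV] mat_eq_on_refl])
  also have "\<dots> = mat_mul m (mat_mul m U (diag_matrix lam)) (mat_transpose U)"
    unfolding trU by (simp add: U_def mat_mul_assoc)
  finally show ?thesis
    using UU unfolding orth_eigendecomp_iff U_def by blast
qed

theorem sym_mat_orth_eigendecomp: "sym_mat n B \<Longrightarrow> \<exists>U lam. orth_eigendecomp n B U lam"
proof (induction n arbitrary: B)
  case 0
  thus ?case by (simp add: orth_eigendecomp_def)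
next
  case (Suc n)
  obtain x lam0 where x: "(\<Sum>i<Suc n. (x i)\<^sup>2) = 1"
    and ev: "\<And>i. i < Suc n \<Longrightarrow> (\<Sum>j<Suc n. B i j * x j) = lam0 * x i"
    using sym_mat_unit_eigenvector[OF _ Suc.prems] by blast
  define Q where "Q = householder (Suc n) (\<lambda>i. x i - mat_id i 0)"
  have Qt: "mat_transpose Q = Q" and QQ: "mat_eq_on (Suc n) (mat_mul (Suc n) Q Q) mat_id"
    unfolding Q_def by (rule householder_transpose, rule householder_orthogonal)
  define C where "C = mat_mul (Suc n) (mat_mul (Suc n) Q B) Q"
  have symC: "sym_mat (Suc n) C" and C0: "\<And>j. j < Suc n \<Longrightarrow> C 0 j = (if j = 0 then lam0 else 0)"
    using householder_deflates[OF Suc.prems _ Qt QQ _ ev] householder_first_column[OF x]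
    unfolding C_def Q_def by auto
  have "sym_mat n (\<lambda>i j. C (Suc i) (Suc j))"
    using symC unfolding sym_mat_def by auto
  then obtain U' lam' where "orth_eigendecomp n (\<lambda>i j. C (Suc i) (Suc j)) U' lam'"
    using Suc.IH by blast
  then obtain V lam where "orth_eigendecomp (Suc n) C V lam"
    using orth_eigendecomp_Suc[OF symC C0] by blast
  thus ?case
    using orth_eigendecomp_conj[OF Qt QQ] unfolding C_def by blast
qed

section \<open>Orthonormal families and Hilbert--Schmidt estimates\<close>

definition vdot :: "nat \<Rightarrow> (nat \<Rightarrow> real) \<Rightarrow> (nat \<Rightarrow> real) \<Rightarrow> real" where
  "vdot N x y = (\<Sum>I<N. x I * y I)"

definition sqnorm :: "nat \<Rightarrow> (nat \<Rightarrow> real) \<Rightarrow> real" where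
  "sqnorm N x = (\<Sum>I<N. (x I)\<^sup>2)"

definition mat_vec :: "nat \<Rightarrow> (nat \<Rightarrow> nat \<Rightarrow> real) \<Rightarrow> (nat \<Rightarrow> real) \<Rightarrow> nat \<Rightarrow> real" where
  "mat_vec N M z = (\<lambda>I. \<Sum>J<N. M I J * z J)"

definition frob_inner :: "nat \<Rightarrow> (nat \<Rightarrow> nat \<Rightarrow> real) \<Rightarrow> (nat \<Rightarrow> nat \<Rightarrow> real) \<Rightarrow> real" where
  "frob_inner N X Y = (\<Sum>I<N. \<Sum>J<N. X I J * Y I J)"

definition hs_sq :: "nat \<Rightarrow> (nat \<Rightarrow> nat \<Rightarrow> real) \<Rightarrow> real" where
  "hs_sq N M = (\<Sum>I<N. \<Sum>J<N. (M I J)\<^sup>2)"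

definition orthonormal_fam :: "nat \<Rightarrow> nat \<Rightarrow> (nat \<Rightarrow> nat \<Rightarrow> real) \<Rightarrow> bool" where
  "orthonormal_fam N p u \<longleftrightarrow> (\<forall>k<p. \<forall>k'<p. vdot N (u k) (u k') = (if k = k' then 1 else 0))"

definition spec_sum :: "nat \<Rightarrow> (nat \<Rightarrow> real) \<Rightarrow> (nat \<Rightarrow> nat \<Rightarrow> real) \<Rightarrow> nat \<Rightarrow> nat \<Rightarrow> real" where
  "spec_sum p a u = (\<lambda>I J. \<Sum>k<p. a k * u k I * u k J)"

lemma sqnorm_vdot: "sqnorm N x = vdot N x x"
  unfolding sqnorm_def vdot_def by (simp add: power2_eq_square)

lemma vdot_commute: "vdot N x y = vdot N y x"
  unfolding vdot_def by (simp add: mult.commute)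

lemma sqnorm_nonneg: "0 \<le> sqnorm N x"
  unfolding sqnorm_def by (simp add: sum_nonneg)

lemma sqnorm_scale: "sqnorm N (\<lambda>I. c * x I) = c\<^sup>2 * sqnorm N x"
  unfolding sqnorm_def by (simp add: power_mult_distrib sum_distrib_left)

lemma sqrt_sqnorm_add_le:
  "sqrt (sqnorm N (\<lambda>I. c * x I + y I)) \<le> \<bar>c\<bar> * sqrt (sqnorm N x) + sqrt (sqnorm N y)"
proof -
  have "sqrt (sqnorm N (\<lambda>I. c * x I + y I)) = L2_set (\<lambda>I. c * x I + y I) {..<N}"
    unfolding sqnorm_def L2_set_def ..
  also have "\<dots> \<le> L2_set (\<lambda>I. c * x I) {..<N} + L2_set y {..<N}"
    by (rule L2_set_triangle_ineq)
  also have "L2_set (\<lambda>I. c * x I) {..<N} = \<bar>c\<bar> * sqrt (sqnorm N x)"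
    using sqnorm_scale[of N c x] unfolding sqnorm_def L2_set_def by (simp add: real_sqrt_mult)
  also have "L2_set y {..<N} = sqrt (sqnorm N y)"
    unfolding sqnorm_def L2_set_def ..
  finally show ?thesis .
qed

lemma vdot_lincomb: "vdot N (\<lambda>I. \<Sum>k<p. a k * u k I) y = (\<Sum>k<p. a k * vdot N (u k) y)"
proof -
  have "vdot N (\<lambda>I. \<Sum>k<p. a k * u k I) y = (\<Sum>I<N. \<Sum>k<p. a k * u k I * y I)"
    unfolding vdot_def by (simp add: sum_distrib_right)
  also have "\<dots> = (\<Sum>k<p. \<Sum>I<N. a k * u k I * y I)"
    by (rule sum.swap)
  also have "\<dots> = (\<Sum>k<p. a k * vdot N (u k) y)"
    unfolding vdot_def by (simp add: sum_distrib_left mult.assoc)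
  finally show ?thesis .
qed

lemma vdot_lincomb_orthonormal:
  assumes "orthonormal_fam N p u" and "k0 < p"
  shows "vdot N (\<lambda>I. \<Sum>k<p. a k * u k I) (u k0) = a k0"
proof -
  have "vdot N (\<lambda>I. \<Sum>k<p. a k * u k I) (u k0) = (\<Sum>k<p. a k * (if k = k0 then 1 else 0))"
    unfolding vdot_lincomb using assms unfolding orthonormal_fam_def by (intro sum.cong refl) auto
  also have "\<dots> = a k0"
    using assms(2) by (rule sum_delta_mult_right)
  finally show ?thesis .
qed

lemma sqnorm_lincomb_orthonormal:
  assumes "orthonormal_fam N q v"
  shows "sqnorm N (\<lambda>I. \<Sum>l<q. b l * v l I) = (\<Sum>l<q. (b l)\<^sup>2)"
proof -
  have "sqnorm N (\<lambda>I. \<Sum>l<q. b l * v l I) = (\<Sum>l<q. b l * vdot N (v l) (\<lambda>I. \<Sum>l<q. b l * v l I))"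
    unfolding sqnorm_vdot vdot_lincomb ..
  also have "\<dots> = (\<Sum>l<q. b l * b l)"
    using assms by (intro sum.cong refl) (simp add: vdot_commute[of N "v _"] vdot_lincomb_orthonormal)
  finally show ?thesis
    by (simp add: power2_eq_square)
qed

lemma bessel_identity:
  assumes "orthonormal_fam N q v"
  shows "sqnorm N (\<lambda>I. y I - (\<Sum>l<q. b l * v l I)) =
         sqnorm N y - (\<Sum>l<q. (vdot N y (v l))\<^sup>2) + (\<Sum>l<q. (b l - vdot N y (v l))\<^sup>2)"
proof -
  define s where "s = (\<lambda>I. \<Sum>l<q. b l * v l I)"
  have "sqnorm N (\<lambda>I. y I - s I) = sqnorm N y - 2 * vdot N y s + sqnorm N s"
    unfolding sqnorm_def vdot_def
    by (simp add: power2_diff sum_subtractf sum.distrib sum_distrib_left mult.assoc)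
  also have "vdot N y s = (\<Sum>l<q. b l * vdot N y (v l))"
    unfolding s_def by (simp add: vdot_commute[of N y] vdot_lincomb)
  also have "sqnorm N s = (\<Sum>l<q. (b l)\<^sup>2)"
    unfolding s_def using sqnorm_lincomb_orthonormal[OF assms] .
  also have "sqnorm N y - 2 * (\<Sum>l<q. b l * vdot N y (v l)) + (\<Sum>l<q. (b l)\<^sup>2) =
      sqnorm N y - (\<Sum>l<q. (vdot N y (v l))\<^sup>2) + (\<Sum>l<q. (b l - vdot N y (v l))\<^sup>2)"
    by (simp add: power2_diff sum_subtractf sum.distrib sum_distrib_left algebra_simps)
  finally show ?thesis
    unfolding s_def .
qed

lemma bessel_inequality:
  assumes "orthonormal_fam N q v"
  shows "(\<Sum>l<q. (vdot N y (v l))\<^sup>2) \<le> sqnorm N y"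
  using sqnorm_nonneg[of N "\<lambda>I. y I - (\<Sum>l<q. vdot N y (v l) * v l I)"]
  unfolding bessel_identity[OF assms] by simp

lemma bessel_distance_lower:
  assumes "orthonormal_fam N q v"
  shows "sqnorm N y - (\<Sum>l<q. (vdot N y (v l))\<^sup>2) \<le> sqnorm N (\<lambda>I. y I - (\<Sum>l<q. b l * v l I))"
  unfolding bessel_identity[OF assms] by (simp add: sum_nonneg)

lemma sqnorm_mat_vec_le: "sqnorm N (mat_vec N M z) \<le> hs_sq N M * sqnorm N z"
proof -
  have "sqnorm N (mat_vec N M z) = (\<Sum>I<N. (\<Sum>J<N. M I J * z J)\<^sup>2)"
    unfolding sqnorm_def mat_vec_def ..
  also have "\<dots> \<le> (\<Sum>I<N. (\<Sum>J<N. (M I J)\<^sup>2) * (\<Sum>J<N. (z J)\<^sup>2))"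
    by (intro sum_mono Cauchy_Schwarz_ineq_sum)
  also have "\<dots> = hs_sq N M * sqnorm N z"
    unfolding hs_sq_def sqnorm_def by (simp add: sum_distrib_right)
  finally show ?thesis .
qed

lemma mat_vec_diff: "mat_vec N (\<lambda>I J. X I J - Y I J) z I = mat_vec N X z I - mat_vec N Y z I"
  unfolding mat_vec_def by (simp add: algebra_simps sum_subtractf)

lemma mat_vec_spec_sum: "mat_vec N (spec_sum p a u) z I = (\<Sum>k<p. a k * u k I * vdot N (u k) z)"
proof -
  have "mat_vec N (spec_sum p a u) z I = (\<Sum>J<N. \<Sum>k<p. a k * u k I * (u k J * z J))"
    unfolding mat_vec_def spec_sum_def by (simp add: sum_distrib_right mult.assoc)
  also have "\<dots> = (\<Sum>k<p. \<Sum>J<N. a k * u k I * (u k J * z J))"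
    by (rule sum.swap)
  also have "\<dots> = (\<Sum>k<p. a k * u k I * vdot N (u k) z)"
    unfolding vdot_def by (simp add: sum_distrib_left)
  finally show ?thesis .
qed

lemma mat_vec_spec_sum_diff_member:
  assumes "orthonormal_fam N p u" and "k < p"
  shows "mat_vec N (\<lambda>I J. spec_sum p lam u I J - spec_sum q mu v I J) (u k) I =
         lam k * u k I - (\<Sum>l<q. (mu l * vdot N (v l) (u k)) * v l I)"
proof -
  have "(\<Sum>k'<p. lam k' * u k' I * vdot N (u k') (u k)) =
      (\<Sum>k'<p. (lam k' * u k' I) * (if k' = k then 1 else 0))"
    using assms unfolding orthonormal_fam_def by (intro sum.cong refl) auto
  also have "\<dots> = lam k * u k I"
    using assms(2) by (rule sum_delta_mult_right)
  finally show ?thesis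
    unfolding mat_vec_diff mat_vec_spec_sum by (simp add: mult_ac)
qed

lemma frob_inner_spec_sum:
  "frob_inner N (spec_sum p a u) (spec_sum q b v) =
     (\<Sum>k<p. \<Sum>l<q. a k * b l * (vdot N (u k) (v l))\<^sup>2)"
proof -
  have row: "(\<Sum>J<N. spec_sum p a u I J * spec_sum q b v I J) =
      (\<Sum>k<p. \<Sum>l<q. a k * b l * vdot N (u k) (v l) * (u k I * v l I))" for I
  proof -
    have "(\<Sum>J<N. spec_sum p a u I J * spec_sum q b v I J) =
        (\<Sum>J<N. \<Sum>k<p. a k * u k I * (spec_sum q b v I J * u k J))"
      unfolding spec_sum_def[of p] sum_distrib_right by (intro sum.cong refl) (simp add: mult_ac)
    also have "\<dots> = (\<Sum>k<p. \<Sum>J<N. a k * u k I * (spec_sum q b v I J * u k J))"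
      by (rule sum.swap)
    also have "\<dots> = (\<Sum>k<p. a k * u k I * mat_vec N (spec_sum q b v) (u k) I)"
      unfolding mat_vec_def by (simp add: sum_distrib_left)
    also have "\<dots> = (\<Sum>k<p. \<Sum>l<q. a k * b l * vdot N (u k) (v l) * (u k I * v l I))"
      unfolding mat_vec_spec_sum by (simp add: sum_distrib_left vdot_commute[of N "v _"] mult_ac)
    finally show ?thesis .
  qed
  have "frob_inner N (spec_sum p a u) (spec_sum q b v) =
      (\<Sum>k<p. \<Sum>I<N. \<Sum>l<q. a k * b l * vdot N (u k) (v l) * (u k I * v l I))"
    unfolding frob_inner_def row by (rule sum.swap)
  also have "\<dots> = (\<Sum>k<p. \<Sum>l<q. \<Sum>I<N. a k * b l * vdot N (u k) (v l) * (u k I * v l I))"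
    by (intro sum.cong refl sum.swap)
  also have "\<dots> = (\<Sum>k<p. \<Sum>l<q. a k * b l * (vdot N (u k) (v l))\<^sup>2)"
    by (simp add: sum_distrib_left[symmetric] vdot_def[symmetric] power2_eq_square mult.assoc)
  finally show ?thesis .
qed

lemma frob_inner_spec_sum_self:
  assumes "orthonormal_fam N p u"
  shows "frob_inner N (spec_sum p a u) (spec_sum p a u) = (\<Sum>k<p. (a k)\<^sup>2)"
proof -
  have "frob_inner N (spec_sum p a u) (spec_sum p a u) =
      (\<Sum>k<p. \<Sum>k'<p. a k * a k' * (if k = k' then 1 else 0))"
    unfolding frob_inner_spec_sum using assms unfolding orthonormal_fam_def
    by (intro sum.cong refl) auto
  also have "\<dots> = (\<Sum>k<p. (a k)\<^sup>2)"
    by (simp add: if_distrib power2_eq_square cong: if_cong)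
  finally show ?thesis .
qed

lemma hs_sq_diff:
  "hs_sq N (\<lambda>I J. X I J - Y I J) = frob_inner N X X - 2 * frob_inner N X Y + frob_inner N Y Y"
proof -
  have "(X I J - Y I J)\<^sup>2 = X I J * X I J - 2 * (X I J * Y I J) + Y I J * Y I J" for I J
    by (simp add: power2_eq_square algebra_simps)
  thus ?thesis
    unfolding hs_sq_def frob_inner_def by (simp add: sum_subtractf sum.distrib sum_distrib_left)
qed

lemma hs_sq_spec_sum_diff:
  assumes "orthonormal_fam N p u" and "orthonormal_fam N q v"
  defines "w \<equiv> \<lambda>k l. vdot N (u k) (v l)"
  shows "hs_sq N (\<lambda>I J. spec_sum p a u I J - spec_sum q b v I J) =
    (\<Sum>k<p. \<Sum>l<q. (a k - b l)\<^sup>2 * (w k l)\<^sup>2) + (\<Sum>k<p. (a k)\<^sup>2 * (1 - (\<Sum>l<q. (w k l)\<^sup>2)))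
    + (\<Sum>l<q. (b l)\<^sup>2 * (1 - (\<Sum>k<p. (w k l)\<^sup>2)))"
proof -
  have e: "(a k - b l)\<^sup>2 * (w k l)\<^sup>2 =
      (a k)\<^sup>2 * (w k l)\<^sup>2 - 2 * (a k * b l * (w k l)\<^sup>2) + (b l)\<^sup>2 * (w k l)\<^sup>2" for k l
    by (simp add: power2_diff algebra_simps)
  have swap: "(\<Sum>k<p. \<Sum>l<q. (b l)\<^sup>2 * (w k l)\<^sup>2) = (\<Sum>l<q. (b l)\<^sup>2 * (\<Sum>k<p. (w k l)\<^sup>2))"
    by (subst sum.swap) (simp add: sum_distrib_left)
  have "(\<Sum>k<p. \<Sum>l<q. (a k - b l)\<^sup>2 * (w k l)\<^sup>2) =
      (\<Sum>k<p. (a k)\<^sup>2 * (\<Sum>l<q. (w k l)\<^sup>2)) - 2 * (\<Sum>k<p. \<Sum>l<q. a k * b l * (w k l)\<^sup>2)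
      + (\<Sum>l<q. (b l)\<^sup>2 * (\<Sum>k<p. (w k l)\<^sup>2))"
    unfolding e swap[symmetric] by (simp add: sum.distrib sum_subtractf sum_distrib_left)
  thus ?thesis
    unfolding hs_sq_diff frob_inner_spec_sum_self[OF assms(1)] frob_inner_spec_sum_self[OF assms(2)]
    unfolding frob_inner_spec_sum w_def by (simp add: right_diff_distrib sum_subtractf)
qed

lemma sqnorm_mat_vec_diff_commute:
  "sqnorm N (mat_vec N (\<lambda>I J. X I J - Y I J) z) = sqnorm N (mat_vec N (\<lambda>I J. Y I J - X I J) z)"
  unfolding sqnorm_def mat_vec_diff by (simp add: power2_commute)

lemma spec_sum_diff_bessel_bounds:
  assumes ou: "orthonormal_fam N p u" and ov: "orthonormal_fam N q v" and k: "k < p"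
    and rho: "sqnorm N (mat_vec N (\<lambda>I J. spec_sum p lam u I J - spec_sum q mu v I J) (u k)) \<le> rho\<^sup>2"
  shows "(\<Sum>l<q. ((lam k - mu l) * vdot N (u k) (v l))\<^sup>2) \<le> rho\<^sup>2"
    and "(lam k)\<^sup>2 * (1 - (\<Sum>l<q. (vdot N (u k) (v l))\<^sup>2)) \<le> rho\<^sup>2"
    and "0 \<le> 1 - (\<Sum>l<q. (vdot N (u k) (v l))\<^sup>2)"
proof -
  define b where "b l = mu l * vdot N (v l) (u k)" for l
  define Y where "Y = (\<lambda>I. lam k * u k I - (\<Sum>l<q. b l * v l I))"
  have "mat_vec N (\<lambda>I J. spec_sum p lam u I J - spec_sum q mu v I J) (u k) = Y"
    unfolding Y_def b_def by (intro ext) (simp add: mat_vec_spec_sum_diff_member[OF ou k])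
  hence Y: "sqnorm N Y \<le> rho\<^sup>2"
    using rho by simp
  have uk: "sqnorm N (u k) = 1"
    using ou k unfolding orthonormal_fam_def sqnorm_vdot by simp
  have vdot_scaled: "vdot N (\<lambda>I. lam k * u k I) (v l) = lam k * vdot N (u k) (v l)" for l
    unfolding vdot_def by (simp add: sum_distrib_left mult.assoc)
  have "vdot N Y (v l) = (lam k - mu l) * vdot N (u k) (v l)" if "l < q" for l
  proof -
    have "vdot N Y (v l) = vdot N (\<lambda>I. lam k * u k I) (v l) - vdot N (\<lambda>I. \<Sum>l<q. b l * v l I) (v l)"
      unfolding Y_def vdot_def by (simp add: algebra_simps sum_subtractf)
    thus ?thesis
      unfolding vdot_scaled vdot_lincomb_orthonormal[OF ov that] b_def
      by (simp add: vdot_commute algebra_simps)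
  qed
  thus "(\<Sum>l<q. ((lam k - mu l) * vdot N (u k) (v l))\<^sup>2) \<le> rho\<^sup>2"
    using bessel_inequality[OF ov, of Y] Y by simp
  have "sqnorm N (\<lambda>I. lam k * u k I) - (\<Sum>l<q. (vdot N (\<lambda>I. lam k * u k I) (v l))\<^sup>2) \<le> sqnorm N Y"
    unfolding Y_def by (rule bessel_distance_lower[OF ov])
  thus "(lam k)\<^sup>2 * (1 - (\<Sum>l<q. (vdot N (u k) (v l))\<^sup>2)) \<le> rho\<^sup>2"
    using Y unfolding sqnorm_scale vdot_scaled uk
    by (simp add: power_mult_distrib sum_distrib_left right_diff_distrib)
  show "0 \<le> 1 - (\<Sum>l<q. (vdot N (u k) (v l))\<^sup>2)"
    using bessel_inequality[OF ov, of "u k"] uk by simp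
qed

lemma cross_term_le:
  fixes a b lam mu :: "nat \<Rightarrow> real" and w :: "nat \<Rightarrow> nat \<Rightarrow> real"
  assumes ab: "\<And>k l. k < p \<Longrightarrow> l < q \<Longrightarrow>
      (a k - b l)\<^sup>2 \<le> L\<^sup>2 * ((lam k)\<^sup>2 + (mu l)\<^sup>2) * (lam k - mu l)\<^sup>2"
    and row: "\<And>k. k < p \<Longrightarrow> (\<Sum>l<q. ((lam k - mu l) * w k l)\<^sup>2) \<le> rho\<^sup>2"
    and col: "\<And>l. l < q \<Longrightarrow> (\<Sum>k<p. ((lam k - mu l) * w k l)\<^sup>2) \<le> rho\<^sup>2"
    and lamG: "(\<Sum>k<p. (lam k)\<^sup>2) \<le> G\<^sup>2" and muG: "(\<Sum>l<q. (mu l)\<^sup>2) \<le> G\<^sup>2"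
  shows "(\<Sum>k<p. \<Sum>l<q. (a k - b l)\<^sup>2 * (w k l)\<^sup>2) \<le> 2 * L\<^sup>2 * G\<^sup>2 * rho\<^sup>2"
proof -
  define m where "m k l = ((lam k - mu l) * w k l)\<^sup>2" for k l
  have "(\<Sum>k<p. \<Sum>l<q. (a k - b l)\<^sup>2 * (w k l)\<^sup>2) \<le>
      (\<Sum>k<p. \<Sum>l<q. L\<^sup>2 * (lam k)\<^sup>2 * m k l + L\<^sup>2 * (mu l)\<^sup>2 * m k l)"
  proof (intro sum_mono)
    fix k l assume "k \<in> {..<p}" "l \<in> {..<q}"
    hence "(a k - b l)\<^sup>2 * (w k l)\<^sup>2 \<le> L\<^sup>2 * ((lam k)\<^sup>2 + (mu l)\<^sup>2) * (lam k - mu l)\<^sup>2 * (w k l)\<^sup>2"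
      using ab by (intro mult_right_mono) auto
    hence "(a k - b l)\<^sup>2 * (w k l)\<^sup>2 \<le> L\<^sup>2 * ((lam k)\<^sup>2 + (mu l)\<^sup>2) * m k l"
      unfolding m_def by (simp add: power_mult_distrib mult.assoc)
    thus "(a k - b l)\<^sup>2 * (w k l)\<^sup>2 \<le> L\<^sup>2 * (lam k)\<^sup>2 * m k l + L\<^sup>2 * (mu l)\<^sup>2 * m k l"
      by (simp add: distrib_left distrib_right)
  qed
  also have "\<dots> = L\<^sup>2 * ((\<Sum>k<p. (lam k)\<^sup>2 * (\<Sum>l<q. m k l)) + (\<Sum>l<q. (mu l)\<^sup>2 * (\<Sum>k<p. m k l)))"
  proof -
    have "(\<Sum>k<p. \<Sum>l<q. L\<^sup>2 * (lam k)\<^sup>2 * m k l + L\<^sup>2 * (mu l)\<^sup>2 * m k l) =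
        L\<^sup>2 * ((\<Sum>k<p. \<Sum>l<q. (lam k)\<^sup>2 * m k l) + (\<Sum>k<p. \<Sum>l<q. (mu l)\<^sup>2 * m k l))"
      by (simp add: sum.distrib sum_distrib_left distrib_left mult.assoc)
    also have "(\<Sum>k<p. \<Sum>l<q. (mu l)\<^sup>2 * m k l) = (\<Sum>l<q. \<Sum>k<p. (mu l)\<^sup>2 * m k l)"
      by (rule sum.swap)
    finally show ?thesis
      by (simp add: sum_distrib_left)
  qed
  also have "\<dots> \<le> L\<^sup>2 * ((\<Sum>k<p. (lam k)\<^sup>2 * rho\<^sup>2) + (\<Sum>l<q. (mu l)\<^sup>2 * rho\<^sup>2))"
    using row col unfolding m_def by (intro mult_left_mono add_mono sum_mono) auto
  also have "\<dots> = L\<^sup>2 * rho\<^sup>2 * ((\<Sum>k<p. (lam k)\<^sup>2) + (\<Sum>l<q. (mu l)\<^sup>2))"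
    by (simp add: sum_distrib_left[symmetric] algebra_simps)
  also have "\<dots> \<le> L\<^sup>2 * rho\<^sup>2 * (G\<^sup>2 + G\<^sup>2)"
    by (intro mult_left_mono add_mono lamG muG) simp
  finally show ?thesis
    by (simp add: algebra_simps)
qed

lemma defect_term_le:
  fixes a lam d :: "nat \<Rightarrow> real"
  assumes a: "\<And>k. k < p \<Longrightarrow> \<bar>a k\<bar> \<le> L * (lam k)\<^sup>2"
    and d: "\<And>k. k < p \<Longrightarrow> 0 \<le> d k" "\<And>k. k < p \<Longrightarrow> (lam k)\<^sup>2 * d k \<le> rho\<^sup>2"
    and lamG: "(\<Sum>k<p. (lam k)\<^sup>2) \<le> G\<^sup>2"
  shows "(\<Sum>k<p. (a k)\<^sup>2 * d k) \<le> L\<^sup>2 * G\<^sup>2 * rho\<^sup>2"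
proof -
  have "(\<Sum>k<p. (a k)\<^sup>2 * d k) \<le> (\<Sum>k<p. L\<^sup>2 * (lam k)\<^sup>2 * rho\<^sup>2)"
  proof (intro sum_mono)
    fix k assume "k \<in> {..<p}"
    hence k: "k < p" by simp
    have "(a k)\<^sup>2 \<le> (L * (lam k)\<^sup>2)\<^sup>2"
      using a[OF k] by (metis abs_ge_zero order_trans power2_abs power_mono)
    hence "(a k)\<^sup>2 * d k \<le> (L * (lam k)\<^sup>2)\<^sup>2 * d k"
      using d(1)[OF k] by (rule mult_right_mono)
    also have "\<dots> = (L\<^sup>2 * (lam k)\<^sup>2) * ((lam k)\<^sup>2 * d k)"
      by (simp add: power_mult_distrib mult_ac)
    also have "\<dots> \<le> (L\<^sup>2 * (lam k)\<^sup>2) * rho\<^sup>2"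
      using d(2)[OF k] by (rule mult_left_mono) simp
    finally show "(a k)\<^sup>2 * d k \<le> L\<^sup>2 * (lam k)\<^sup>2 * rho\<^sup>2" .
  qed
  also have "\<dots> = L\<^sup>2 * rho\<^sup>2 * (\<Sum>k<p. (lam k)\<^sup>2)"
    by (simp add: sum_distrib_left algebra_simps)
  also have "\<dots> \<le> L\<^sup>2 * rho\<^sup>2 * G\<^sup>2"
    by (intro mult_left_mono lamG) simp
  finally show ?thesis
    by (simp add: algebra_simps)
qed

lemma remainder_bound_squared:
  fixes g :: "real \<Rightarrow> real"
  assumes "\<bar>g x - g y\<bar> \<le> L * max \<bar>x\<bar> \<bar>y\<bar> * \<bar>x - y\<bar>"
  shows "(g x - g y)\<^sup>2 \<le> L\<^sup>2 * (x\<^sup>2 + y\<^sup>2) * (x - y)\<^sup>2"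
proof -
  have "(g x - g y)\<^sup>2 \<le> (L * max \<bar>x\<bar> \<bar>y\<bar> * \<bar>x - y\<bar>)\<^sup>2"
    using assms by (metis abs_ge_zero order_trans power2_abs power_mono)
  also have "\<dots> = L\<^sup>2 * (max \<bar>x\<bar> \<bar>y\<bar>)\<^sup>2 * (x - y)\<^sup>2"
    by (simp add: power_mult_distrib)
  also have "\<dots> \<le> L\<^sup>2 * (x\<^sup>2 + y\<^sup>2) * (x - y)\<^sup>2"
    by (intro mult_right_mono mult_left_mono) (auto simp: max_def)
  finally show ?thesis .
qed

lemma hs_sq_spec_sum_fun_diff_le:
  fixes g :: "real \<Rightarrow> real" and lam mu :: "nat \<Rightarrow> real"
  assumes ou: "orthonormal_fam N p u" and ov: "orthonormal_fam N q v"
    and rho: "\<And>z. sqnorm N z \<le> 1 \<Longrightarrow>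
      sqnorm N (mat_vec N (\<lambda>I J. spec_sum p lam u I J - spec_sum q mu v I J) z) \<le> rho\<^sup>2"
    and lamG: "(\<Sum>k<p. (lam k)\<^sup>2) \<le> G\<^sup>2" and muG: "(\<Sum>l<q. (mu l)\<^sup>2) \<le> G\<^sup>2"
    and g: "\<And>x y. x \<in> S \<Longrightarrow> y \<in> S \<Longrightarrow> \<bar>g x - g y\<bar> \<le> L * max \<bar>x\<bar> \<bar>y\<bar> * \<bar>x - y\<bar>"
    and "0 \<in> S" and "g 0 = 0"
    and lamS: "\<And>k. k < p \<Longrightarrow> lam k \<in> S" and muS: "\<And>l. l < q \<Longrightarrow> mu l \<in> S"
  shows "hs_sq N (\<lambda>I J. spec_sum p (\<lambda>k. g (lam k)) u I J - spec_sum q (\<lambda>l. g (mu l)) v I J)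
         \<le> (2 * L * G * rho)\<^sup>2"
proof -
  define w where "w k l = vdot N (u k) (v l)" for k l
  have g0: "\<bar>g x\<bar> \<le> L * x\<^sup>2" if "x \<in> S" for x
    using g[OF that \<open>0 \<in> S\<close>] \<open>g 0 = 0\<close> by (simp add: power2_eq_square mult.assoc abs_mult_self_eq)
  have unit_u: "sqnorm N (u k) = 1" if "k < p" for k
    using ou that unfolding orthonormal_fam_def sqnorm_vdot by simp
  have unit_v: "sqnorm N (v l) = 1" if "l < q" for l
    using ov that unfolding orthonormal_fam_def sqnorm_vdot by simp
  have row: "(\<Sum>l<q. ((lam k - mu l) * w k l)\<^sup>2) \<le> rho\<^sup>2"
    "(lam k)\<^sup>2 * (1 - (\<Sum>l<q. (w k l)\<^sup>2)) \<le> rho\<^sup>2" "0 \<le> 1 - (\<Sum>l<q. (w k l)\<^sup>2)"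
    if "k < p" for k
    using spec_sum_diff_bessel_bounds[OF ou ov that rho] unit_u[OF that] unfolding w_def by auto
  have col: "(\<Sum>k<p. ((lam k - mu l) * w k l)\<^sup>2) \<le> rho\<^sup>2"
    "(mu l)\<^sup>2 * (1 - (\<Sum>k<p. (w k l)\<^sup>2)) \<le> rho\<^sup>2" "0 \<le> 1 - (\<Sum>k<p. (w k l)\<^sup>2)"
    if "l < q" for l
  proof -
    have "sqnorm N (mat_vec N (\<lambda>I J. spec_sum q mu v I J - spec_sum p lam u I J) (v l)) \<le> rho\<^sup>2"
      using rho[of "v l"] unit_v[OF that] by (subst sqnorm_mat_vec_diff_commute) simp
    from spec_sum_diff_bessel_bounds[OF ov ou that this]
    show "(\<Sum>k<p. ((lam k - mu l) * w k l)\<^sup>2) \<le> rho\<^sup>2"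
      "(mu l)\<^sup>2 * (1 - (\<Sum>k<p. (w k l)\<^sup>2)) \<le> rho\<^sup>2" "0 \<le> 1 - (\<Sum>k<p. (w k l)\<^sup>2)"
      unfolding w_def by (simp_all add: vdot_commute[of N "v l"] power_mult_distrib power2_commute)
  qed
  have "(\<Sum>k<p. \<Sum>l<q. (g (lam k) - g (mu l))\<^sup>2 * (w k l)\<^sup>2) \<le> 2 * L\<^sup>2 * G\<^sup>2 * rho\<^sup>2"
    by (rule cross_term_le[OF remainder_bound_squared[OF g[OF lamS muS]] row(1) col(1) lamG muG])
  moreover have "(\<Sum>k<p. (g (lam k))\<^sup>2 * (1 - (\<Sum>l<q. (w k l)\<^sup>2))) \<le> L\<^sup>2 * G\<^sup>2 * rho\<^sup>2"
    by (rule defect_term_le[OF g0[OF lamS] row(3) row(2) lamG])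
  moreover have "(\<Sum>l<q. (g (mu l))\<^sup>2 * (1 - (\<Sum>k<p. (w k l)\<^sup>2))) \<le> L\<^sup>2 * G\<^sup>2 * rho\<^sup>2"
    by (rule defect_term_le[OF g0[OF muS] col(3) col(2) muG])
  ultimately show ?thesis
    unfolding hs_sq_spec_sum_diff[OF ou ov] w_def by (simp add: power_mult_distrib)
qed

lemma spec_sum_fun_diff_bound:
  fixes f :: "real \<Rightarrow> real" and lam mu :: "nat \<Rightarrow> real"
  assumes ou: "orthonormal_fam N p u" and ov: "orthonormal_fam N q v"
    and rho: "\<And>z. sqnorm N z \<le> 1 \<Longrightarrow>
      sqnorm N (mat_vec N (\<lambda>I J. spec_sum p lam u I J - spec_sum q mu v I J) z) \<le> rho\<^sup>2"
    and "0 \<le> rho" and "0 \<le> L" and "0 \<le> G"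
    and lamG: "(\<Sum>k<p. (lam k)\<^sup>2) \<le> G\<^sup>2" and muG: "(\<Sum>l<q. (mu l)\<^sup>2) \<le> G\<^sup>2"
    and f: "\<And>x y. x \<in> S \<Longrightarrow> y \<in> S \<Longrightarrow>
      \<bar>(f x - c * x) - (f y - c * y)\<bar> \<le> L * max \<bar>x\<bar> \<bar>y\<bar> * \<bar>x - y\<bar>"
    and "0 \<in> S" and "f 0 = 0"
    and lamS: "\<And>k. k < p \<Longrightarrow> lam k \<in> S" and muS: "\<And>l. l < q \<Longrightarrow> mu l \<in> S"
    and z: "sqnorm N z \<le> 1"
  shows "sqrt (sqnorm N (mat_vec N
           (\<lambda>I J. spec_sum p (\<lambda>k. f (lam k)) u I J - spec_sum q (\<lambda>l. f (mu l)) v I J) z))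
         \<le> (\<bar>c\<bar> + 2 * L * G) * rho"
proof -
  define D where "D = (\<lambda>I J. spec_sum p lam u I J - spec_sum q mu v I J)"
  define R where "R = (\<lambda>I J. spec_sum p (\<lambda>k. f (lam k) - c * lam k) u I J
                             - spec_sum q (\<lambda>l. f (mu l) - c * mu l) v I J)"
  have split: "mat_vec N (\<lambda>I J. spec_sum p (\<lambda>k. f (lam k)) u I J - spec_sum q (\<lambda>l. f (mu l)) v I J) z =
      (\<lambda>I. c * mat_vec N D z I + mat_vec N R z I)"
    unfolding mat_vec_def D_def R_def spec_sum_def
    by (intro ext) (simp add: algebra_simps sum.distrib sum_subtractf sum_distrib_left)
  have "sqrt (sqnorm N (mat_vec N D z)) \<le> rho"
    using rho[OF z] \<open>0 \<le> rho\<close> unfolding D_def by (simp add: real_sqrt_le_iff sqrt_le_D real_le_lsqrt)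
  moreover have "sqrt (sqnorm N (mat_vec N R z)) \<le> 2 * L * G * rho"
  proof -
    have "sqnorm N (mat_vec N R z) \<le> hs_sq N R * sqnorm N z"
      by (rule sqnorm_mat_vec_le)
    also have "\<dots> \<le> hs_sq N R"
      using z by (intro mult_left_le) (auto simp: hs_sq_def sum_nonneg)
    also have "\<dots> \<le> (2 * L * G * rho)\<^sup>2"
      unfolding R_def using \<open>0 \<in> S\<close> \<open>f 0 = 0\<close> f lamS muS
      by (intro hs_sq_spec_sum_fun_diff_le[OF ou ov rho lamG muG, where S = S]) auto
    finally show ?thesis
      using \<open>0 \<le> rho\<close> \<open>0 \<le> L\<close> \<open>0 \<le> G\<close> by (simp add: real_le_lsqrt)
  qed
  ultimately have "\<bar>c\<bar> * sqrt (sqnorm N (mat_vec N D z)) + sqrt (sqnorm N (mat_vec N R z))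
      \<le> (\<bar>c\<bar> + 2 * L * G) * rho"
    by (smt (verit, ccfv_SIG) abs_ge_zero distrib_right mult_left_mono)
  thus ?thesis
    unfolding split using sqrt_sqnorm_add_le order_trans by blast
qed

section \<open>Step graphons and their integral operators on \<open>L\<^sup>2[0,1]\<close>\<close>

abbreviation cell_ind :: "nat \<Rightarrow> nat \<Rightarrow> real \<Rightarrow> real" where
  "cell_ind N I \<equiv> indicator (part_int N I)"

lemma mem_part_int_iff: "0 < N \<Longrightarrow> x \<in> part_int N I \<longleftrightarrow> real I \<le> x * N \<and> x * N < real I + 1"
  unfolding part_int_def by (auto simp: field_simps)

lemma part_int_subset_01: "I < N \<Longrightarrow> part_int N I \<subseteq> {0..1}"
proof
  fix x assume I: "I < N" and x: "x \<in> part_int N I"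
  hence "real (Suc I) / real N \<le> 1"
    by simp
  moreover have "0 \<le> real I / real N" "real I / real N \<le> x" "x < real (Suc I) / real N"
    using x unfolding part_int_def by auto
  ultimately show "x \<in> {0..1}"
    unfolding atLeastAtMost_iff by linarith
qed

lemma part_int_disjoint: "I \<noteq> J \<Longrightarrow> x \<in> part_int N I \<Longrightarrow> x \<notin> part_int N J"
proof
  assume "I \<noteq> J" and x: "x \<in> part_int N I" "x \<in> part_int N J"
  have N: "0 < N"
    using x unfolding part_int_def by (cases N) auto
  hence "real I < real J + 1" "real J < real I + 1"
    using x mem_part_int_iff[OF N] by fastforce+
  thus False
    using \<open>I \<noteq> J\<close> by linarith
qed

lemma disjoint_family_part_int: "disjoint_family_on (part_int N) A"
  unfolding disjoint_family_on_def using part_int_disjoint by blast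

lemma cell_ind_mult: "cell_ind N I x * cell_ind N J x = (if I = J then cell_ind N I x else 0)"
  using part_int_disjoint[of I J x N] by (auto simp: indicator_def)

lemma cell_ind_le_indicator_01: "I < N \<Longrightarrow> cell_ind N I x \<le> indicator {0..1} x"
  using part_int_subset_01[of I N] by (auto simp: indicator_def)

lemma indicator_01_mult_cell_ind: "I < N \<Longrightarrow> indicator {0..1} x * cell_ind N I x = cell_ind N I x"
  using part_int_subset_01[of I N] by (auto simp: indicator_def)

lemma sum_cell_ind_le_indicator_01: "(\<Sum>J<N. cell_ind N J x) \<le> indicator {0..1} x"
proof -
  have "(\<Sum>J<N. cell_ind N J x) = indicator (\<Union>J<N. part_int N J) x"
    by (rule indicator_UN_disjoint[OF finite_lessThan disjoint_family_part_int, symmetric])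
  also have "\<dots> \<le> indicator {0..1} x"
    using UN_least[of "{..<N}" "part_int N" "{0..1}"] part_int_subset_01[of _ N]
    by (auto simp: indicator_def)
  finally show ?thesis .
qed

lemma cell_ind_measurable [measurable]: "cell_ind N I \<in> borel_measurable borel"
  unfolding part_int_def by measurable

lemma cell_ind_integrable: "integrable lborel (cell_ind N I)"
  unfolding part_int_def
  by (intro integrable_real_indicator) (auto simp: emeasure_lborel_Ico divide_right_mono)

lemma measure_part_int: "I < N \<Longrightarrow> measure lborel (part_int N I) = 1 / N"
  unfolding part_int_def
  by (simp add: measure_lborel_Ico divide_right_mono diff_divide_distrib[symmetric])

lemma abs_le_1_plus_sq: "\<bar>t::real\<bar> \<le> 1 + t\<^sup>2"
proof -
  have "0 \<le> (\<bar>t\<bar> - 1)\<^sup>2"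
    by simp
  hence "0 \<le> t\<^sup>2 - 2 * \<bar>t\<bar> + 1"
    by (simp add: power2_diff power2_abs)
  thus ?thesis
    using abs_ge_zero[of t] by linarith
qed

definition cell_integral :: "nat \<Rightarrow> (real \<Rightarrow> real) \<Rightarrow> nat \<Rightarrow> real" where
  "cell_integral N \<psi> J = integral\<^sup>L lborel (\<lambda>u. cell_ind N J u * \<psi> u)"

lemma L2_0_1_integrable:
  assumes "\<psi> \<in> L2_0_1"
  shows L2_0_1_sq_integrable: "integrable lborel (\<lambda>x. indicator {0..1} x * (\<psi> x)\<^sup>2)"
    and L2_0_1_cell_integrable: "J < N \<Longrightarrow> integrable lborel (\<lambda>x. cell_ind N J x * \<psi> x)"
    and L2_0_1_cell_sq_integrable: "J < N \<Longrightarrow> integrable lborel (\<lambda>x. cell_ind N J x * (\<psi> x)\<^sup>2)"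
proof -
  have [measurable]: "\<psi> \<in> borel_measurable lborel"
    using assms unfolding L2_0_1_def by simp
  show sq: "integrable lborel (\<lambda>x. indicator {0..1} x * (\<psi> x)\<^sup>2)"
    using assms unfolding L2_0_1_def set_integrable_def by simp
  assume J: "J < N"
  have cell: "0 \<le> cell_ind N J x" "cell_ind N J x \<le> indicator {0..1} x" for x
    using cell_ind_le_indicator_01[OF J] by auto
  have "integrable lborel (\<lambda>x. indicator {0..1} x + indicator {0..1} x * (\<psi> x)\<^sup>2)"
    by (intro Bochner_Integration.integrable_add sq integrable_real_indicator) auto
  thus "integrable lborel (\<lambda>x. cell_ind N J x * \<psi> x)"
  proof (rule Bochner_Integration.integrable_bound)
    show "AE x in lborel. norm (cell_ind N J x * \<psi> x) \<le>
        norm (indicator {0..1} x + indicator {0..1} x * (\<psi> x)\<^sup>2)"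
    proof (intro AE_I2)
      fix x
      have "\<bar>cell_ind N J x * \<psi> x\<bar> \<le> indicator {0..1} x * (1 + (\<psi> x)\<^sup>2)"
        unfolding abs_mult using cell abs_le_1_plus_sq[of "\<psi> x"] by (intro mult_mono) auto
      thus "norm (cell_ind N J x * \<psi> x) \<le> norm (indicator {0..1} x + indicator {0..1} x * (\<psi> x)\<^sup>2)"
        by (simp add: algebra_simps indicator_def)
    qed
  qed measurable
  show "integrable lborel (\<lambda>x. cell_ind N J x * (\<psi> x)\<^sup>2)"
    using sq
  proof (rule Bochner_Integration.integrable_bound)
    show "AE x in lborel. norm (cell_ind N J x * (\<psi> x)\<^sup>2) \<le> norm (indicator {0..1} x * (\<psi> x)\<^sup>2)"
      using cell by (intro AE_I2) (simp add: abs_mult mult_right_mono)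
  qed measurable
qed

lemma int_op_step_graphon:
  assumes psi: "\<psi> \<in> L2_0_1"
  shows "int_op (step_graphon N K) \<psi> v = (\<Sum>I<N. cell_ind N I v * (\<Sum>J<N. K I J * cell_integral N \<psi> J))"
proof -
  have "indicator {0..1} u *\<^sub>R (step_graphon N K v u * \<psi> u) =
      (\<Sum>I<N. \<Sum>J<N. (K I J * cell_ind N I v) * (cell_ind N J u * \<psi> u))" for u
  proof -
    have "indicator {0..1} u *\<^sub>R (step_graphon N K v u * \<psi> u) =
        (\<Sum>I<N. \<Sum>J<N. (K I J * cell_ind N I v) * ((indicator {0..1} u * cell_ind N J u) * \<psi> u))"
      unfolding step_graphon_def by (simp add: sum_distrib_left sum_distrib_right mult_ac)
    also have "\<dots> = (\<Sum>I<N. \<Sum>J<N. (K I J * cell_ind N I v) * (cell_ind N J u * \<psi> u))"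
      by (intro sum.cong refl) (simp add: indicator_01_mult_cell_ind)
    finally show ?thesis .
  qed
  hence "int_op (step_graphon N K) \<psi> v =
      integral\<^sup>L lborel (\<lambda>u. \<Sum>I<N. \<Sum>J<N. (K I J * cell_ind N I v) * (cell_ind N J u * \<psi> u))"
    unfolding int_op_def set_lebesgue_integral_def by simp
  also have "\<dots> = (\<Sum>I<N. integral\<^sup>L lborel (\<lambda>u. \<Sum>J<N. (K I J * cell_ind N I v) * (cell_ind N J u * \<psi> u)))"
    using L2_0_1_cell_integrable[OF psi]
    by (intro Bochner_Integration.integral_sum Bochner_Integration.integrable_sum
        Bochner_Integration.integrable_mult_right) auto
  also have "\<dots> = (\<Sum>I<N. \<Sum>J<N. integral\<^sup>L lborel (\<lambda>u. (K I J * cell_ind N I v) * (cell_ind N J u * \<psi> u)))"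
    using L2_0_1_cell_integrable[OF psi]
    by (intro sum.cong refl Bochner_Integration.integral_sum Bochner_Integration.integrable_mult_right) auto
  also have "\<dots> = (\<Sum>I<N. \<Sum>J<N. (K I J * cell_ind N I v) * cell_integral N \<psi> J)"
    unfolding cell_integral_def by simp
  finally show ?thesis
    by (simp add: sum_distrib_left mult_ac)
qed

lemma cell_sum_sq: "(\<Sum>I<N. cell_ind N I x * y I)\<^sup>2 = (\<Sum>I<N. cell_ind N I x * (y I)\<^sup>2)"
proof -
  have "(\<Sum>I<N. cell_ind N I x * y I)\<^sup>2 =
      (\<Sum>I<N. \<Sum>J<N. (cell_ind N I x * cell_ind N J x) * (y I * y J))"
    unfolding power2_eq_square sum_product by (simp only: ac_simps)
  also have "\<dots> = (\<Sum>I<N. \<Sum>J<N. if J = I then cell_ind N I x * (y I)\<^sup>2 else 0)"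
    unfolding cell_ind_mult by (intro sum.cong refl) (auto simp: power2_eq_square)
  finally show ?thesis
    by simp
qed

lemma cell_sum_measurable [measurable]: "(\<lambda>x. \<Sum>I<N. cell_ind N I x * y I) \<in> borel_measurable lborel"
  by measurable

lemma integral_cell_sum_sq:
  "integral\<^sup>L lborel (\<lambda>x. indicator {0..1} x * (\<Sum>I<N. cell_ind N I x * y I)\<^sup>2) = (\<Sum>I<N. (y I)\<^sup>2) / N"
  and integrable_cell_sum_sq:
  "integrable lborel (\<lambda>x. indicator {0..1} x * (\<Sum>I<N. cell_ind N I x * y I)\<^sup>2)"
proof -
  have eq: "indicator {0..1} x * (\<Sum>I<N. cell_ind N I x * y I)\<^sup>2 = (\<Sum>I<N. (y I)\<^sup>2 * cell_ind N I x)"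
    for x
    unfolding cell_sum_sq sum_distrib_left
  proof (intro sum.cong refl)
    fix I assume "I \<in> {..<N}"
    hence "indicator {0..1} x * cell_ind N I x = cell_ind N I x"
      by (simp add: indicator_01_mult_cell_ind)
    thus "indicator {0..1} x * (cell_ind N I x * (y I)\<^sup>2) = (y I)\<^sup>2 * cell_ind N I x"
      by (metis mult.assoc mult.commute)
  qed
  show "integrable lborel (\<lambda>x. indicator {0..1} x * (\<Sum>I<N. cell_ind N I x * y I)\<^sup>2)"
    unfolding eq by (intro Bochner_Integration.integrable_sum integrable_mult_right cell_ind_integrable)
  have "integral\<^sup>L lborel (\<lambda>x. indicator {0..1} x * (\<Sum>I<N. cell_ind N I x * y I)\<^sup>2) =
      (\<Sum>I<N. (y I)\<^sup>2 * integral\<^sup>L lborel (cell_ind N I))"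
    unfolding eq by (subst Bochner_Integration.integral_sum) (auto intro: cell_ind_integrable)
  also have "\<dots> = (\<Sum>I<N. (y I)\<^sup>2 / N)"
    by (intro sum.cong refl) (simp add: measure_part_int)
  finally show "integral\<^sup>L lborel (\<lambda>x. indicator {0..1} x * (\<Sum>I<N. cell_ind N I x * y I)\<^sup>2) =
      (\<Sum>I<N. (y I)\<^sup>2) / N"
    by (simp add: sum_divide_distrib)
qed

lemma L2_norm_cell_sum: "L2_norm (\<lambda>x. \<Sum>I<N. cell_ind N I x * y I) = sqrt ((\<Sum>I<N. (y I)\<^sup>2) / N)"
  unfolding L2_norm_def set_lebesgue_integral_def using integral_cell_sum_sq[of N y] by simp

lemma power2_L2_norm:
  "\<psi> \<in> L2_0_1 \<Longrightarrow> (L2_norm \<psi>)\<^sup>2 = integral\<^sup>L lborel (\<lambda>x. indicator {0..1} x * (\<psi> x)\<^sup>2)"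
  unfolding L2_norm_def set_lebesgue_integral_def
  by (simp add: Bochner_Integration.integral_nonneg)

lemma L2_norm_nonneg: "0 \<le> L2_norm \<psi>"
  unfolding L2_norm_def set_lebesgue_integral_def
  by (simp add: Bochner_Integration.integral_nonneg)

text \<open>Cauchy--Schwarz on a single cell, in the form \<open>0 \<le> \<integral>\<^sub>P (\<psi> - a)\<^sup>2\<close> with \<open>a\<close> the
  mean of \<open>\<psi>\<close> on the cell.\<close>

lemma cell_integral_sq_le:
  assumes psi: "\<psi> \<in> L2_0_1" and J: "J < N"
  shows "N * (cell_integral N \<psi> J)\<^sup>2 \<le> integral\<^sup>L lborel (\<lambda>x. cell_ind N J x * (\<psi> x)\<^sup>2)"
proof -
  define a where "a = N * cell_integral N \<psi> J"
  have [simp]: "integrable lborel (\<lambda>x. cell_ind N J x * (\<psi> x)\<^sup>2)"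
    "integrable lborel (\<lambda>x. cell_ind N J x * \<psi> x)" "integrable lborel (cell_ind N J)"
    using L2_0_1_cell_sq_integrable[OF psi J] L2_0_1_cell_integrable[OF psi J] cell_ind_integrable
    by auto
  have eq: "cell_ind N J x * (\<psi> x - a)\<^sup>2 =
      cell_ind N J x * (\<psi> x)\<^sup>2 - 2 * a * (cell_ind N J x * \<psi> x) + a\<^sup>2 * cell_ind N J x" for x
    by (simp add: power2_diff algebra_simps)
  have "0 \<le> integral\<^sup>L lborel (\<lambda>x. cell_ind N J x * (\<psi> x - a)\<^sup>2)"
    by (intro Bochner_Integration.integral_nonneg) simp
  also have "\<dots> = integral\<^sup>L lborel (\<lambda>x. cell_ind N J x * (\<psi> x)\<^sup>2) - 2 * a * cell_integral N \<psi> J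
      + a\<^sup>2 * (1 / N)"
    unfolding eq cell_integral_def using J by (simp add: measure_part_int)
  finally show ?thesis
    using J unfolding a_def by (simp add: power2_eq_square field_simps)
qed

lemma sqnorm_cell_integrals_le:
  assumes psi: "\<psi> \<in> L2_0_1"
  shows "sqnorm N (\<lambda>J. sqrt N * cell_integral N \<psi> J) \<le> (L2_norm \<psi>)\<^sup>2"
proof -
  have "sqnorm N (\<lambda>J. sqrt N * cell_integral N \<psi> J) = (\<Sum>J<N. N * (cell_integral N \<psi> J)\<^sup>2)"
    unfolding sqnorm_def by (simp add: power_mult_distrib)
  also have "\<dots> \<le> (\<Sum>J<N. integral\<^sup>L lborel (\<lambda>x. cell_ind N J x * (\<psi> x)\<^sup>2))"
    by (intro sum_mono cell_integral_sq_le[OF psi]) simp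
  also have "\<dots> = integral\<^sup>L lborel (\<lambda>x. \<Sum>J<N. cell_ind N J x * (\<psi> x)\<^sup>2)"
    using L2_0_1_cell_sq_integrable[OF psi]
    by (subst Bochner_Integration.integral_sum) auto
  also have "\<dots> \<le> integral\<^sup>L lborel (\<lambda>x. indicator {0..1} x * (\<psi> x)\<^sup>2)"
  proof (rule Bochner_Integration.integral_mono)
    show "integrable lborel (\<lambda>x. \<Sum>J<N. cell_ind N J x * (\<psi> x)\<^sup>2)"
      using L2_0_1_cell_sq_integrable[OF psi] by (intro Bochner_Integration.integrable_sum) auto
    show "(\<Sum>J<N. cell_ind N J x * (\<psi> x)\<^sup>2) \<le> indicator {0..1} x * (\<psi> x)\<^sup>2" for x
      unfolding sum_distrib_right[symmetric]
      by (intro mult_right_mono sum_cell_ind_le_indicator_01) simp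
  qed (rule L2_0_1_sq_integrable[OF psi])
  also have "\<dots> = (L2_norm \<psi>)\<^sup>2"
    using power2_L2_norm[OF psi] by simp
  finally show ?thesis .
qed

definition step_lift :: "nat \<Rightarrow> (nat \<Rightarrow> real) \<Rightarrow> real \<Rightarrow> real" where
  "step_lift N z = (\<lambda>u. \<Sum>J<N. cell_ind N J u * (sqrt N * z J))"

lemma step_lift_L2: "step_lift N z \<in> L2_0_1"
proof -
  have "step_lift N z \<in> borel_measurable lborel"
    unfolding step_lift_def by (rule cell_sum_measurable)
  moreover have "set_integrable lborel {0..1} (\<lambda>x. (step_lift N z x)\<^sup>2)"
    unfolding set_integrable_def real_scaleR_def step_lift_def by (rule integrable_cell_sum_sq)
  ultimately show ?thesis
    unfolding L2_0_1_def by simp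
qed

lemma L2_norm_step_lift: "0 < N \<Longrightarrow> L2_norm (step_lift N z) = sqrt (sqnorm N z)"
  unfolding step_lift_def L2_norm_cell_sum sqnorm_def
  by (simp add: power_mult_distrib sum_distrib_left[symmetric])

lemma cell_integral_step_lift: "K < N \<Longrightarrow> sqrt N * cell_integral N (step_lift N z) K = z K"
proof -
  assume K: "K < N"
  have eq: "cell_ind N K u * step_lift N z u = (sqrt N * z K) * cell_ind N K u" for u
  proof -
    have "cell_ind N K u * step_lift N z u =
        (\<Sum>J<N. if K = J then cell_ind N K u * (sqrt N * z K) else 0)"
      unfolding step_lift_def sum_distrib_left mult.assoc[symmetric] cell_ind_mult
      by (intro sum.cong refl) auto
    thus ?thesis
      using K by (simp add: mult.commute)
  qed
  have "cell_integral N (step_lift N z) K = (sqrt N * z K) * (1 / N)"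
    unfolding cell_integral_def eq using K by (simp add: measure_part_int)
  hence "sqrt N * cell_integral N (step_lift N z) K = (sqrt N * sqrt N) * z K * (1 / N)"
    by (simp only: mult.assoc)
  thus ?thesis
    using K by simp
qed

lemma mat_vec_cong: "(\<And>J. J < N \<Longrightarrow> z J = z' J) \<Longrightarrow> mat_vec N M z = mat_vec N M z'"
  unfolding mat_vec_def by (intro ext sum.cong) auto

text \<open>On \<open>N\<close> cells the operator of the step graphon of \<open>N K\<close> acts as the matrix \<open>K\<close> on
  the coefficients \<open>\<surd>N \<integral>\<^sub>P\<^sub>J \<psi>\<close>, and \<open>z \<mapsto> step_lift N z\<close> is an isometric section of
  \<open>\<psi> \<mapsto> (\<surd>N \<integral>\<^sub>P\<^sub>J \<psi>)\<^sub>J\<close>. Hence the \<open>L\<^sup>2\<close> operator norm of a difference of such operators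
  is the Euclidean operator norm of \<open>K1 - K2\<close>.\<close>

definition step_diff_op ::
  "nat \<Rightarrow> (nat \<Rightarrow> nat \<Rightarrow> real) \<Rightarrow> (nat \<Rightarrow> nat \<Rightarrow> real) \<Rightarrow> (real \<Rightarrow> real) \<Rightarrow> real \<Rightarrow> real" where
  "step_diff_op N K1 K2 = op_diff (int_op (step_graphon N (\<lambda>I J. real N * K1 I J)))
                                  (int_op (step_graphon N (\<lambda>I J. real N * K2 I J)))"

lemma L2_norm_step_diff_op:
  assumes psi: "\<psi> \<in> L2_0_1" and N: "0 < N"
  shows "L2_norm (step_diff_op N K1 K2 \<psi>) =
         sqrt (sqnorm N (mat_vec N (\<lambda>I J. K1 I J - K2 I J) (\<lambda>J. sqrt N * cell_integral N \<psi> J)))"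
proof -
  define x where "x I = (\<Sum>J<N. (K1 I J - K2 I J) * cell_integral N \<psi> J)" for I
  have T: "step_diff_op N K1 K2 \<psi> = (\<lambda>v. \<Sum>I<N. cell_ind N I v * (real N * x I))"
    unfolding step_diff_op_def op_diff_def int_op_step_graphon[OF psi] x_def
    by (intro ext sum.cong refl) (simp add: sum_subtractf[symmetric] sum_distrib_left algebra_simps)
  have M: "mat_vec N (\<lambda>I J. K1 I J - K2 I J) (\<lambda>J. sqrt N * cell_integral N \<psi> J) = (\<lambda>I. sqrt N * x I)"
    unfolding mat_vec_def x_def by (simp add: sum_distrib_left mult_ac)
  show ?thesis
    unfolding T M L2_norm_cell_sum sqnorm_def using N
    by (simp add: power_mult_distrib sum_distrib_left[symmetric] power2_eq_square[of "real N"])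
qed

lemma L2_norm_step_diff_op_le:
  assumes N: "0 < N" and psi: "\<psi> \<in> L2_0_1" "L2_norm \<psi> \<le> 1"
    and B: "\<And>z. sqnorm N z \<le> 1 \<Longrightarrow> sqrt (sqnorm N (mat_vec N (\<lambda>I J. K1 I J - K2 I J) z)) \<le> B"
  shows "L2_norm (step_diff_op N K1 K2 \<psi>) \<le> B"
proof -
  have "sqnorm N (\<lambda>J. sqrt N * cell_integral N \<psi> J) \<le> (L2_norm \<psi>)\<^sup>2"
    by (rule sqnorm_cell_integrals_le[OF psi(1)])
  also have "\<dots> \<le> 1"
    using psi(2) L2_norm_nonneg by (simp add: power_le_one)
  finally show ?thesis
    unfolding L2_norm_step_diff_op[OF psi(1) N] by (rule B)
qed

lemma L2_opnorm_step_diff_op_le: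
  assumes N: "0 < N"
    and B: "\<And>z. sqnorm N z \<le> 1 \<Longrightarrow> sqrt (sqnorm N (mat_vec N (\<lambda>I J. K1 I J - K2 I J) z)) \<le> B"
  shows "L2_opnorm (step_diff_op N K1 K2) \<le> B"
  unfolding L2_opnorm_def
proof (rule cSUP_least)
  show "{\<psi> \<in> L2_0_1. L2_norm \<psi> \<le> 1} \<noteq> {}"
    using step_lift_L2[of N "\<lambda>_. 0"] L2_norm_step_lift[OF N, of "\<lambda>_. 0"] by (auto simp: sqnorm_def)
qed (use L2_norm_step_diff_op_le[OF N _ _ B] in blast)

lemma L2_opnorm_step_diff_op_ge:
  assumes N: "0 < N" and z: "sqnorm N z \<le> 1"
  shows "sqrt (sqnorm N (mat_vec N (\<lambda>I J. K1 I J - K2 I J) z)) \<le> L2_opnorm (step_diff_op N K1 K2)"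
proof -
  define S where "S = {\<psi> \<in> L2_0_1. L2_norm \<psi> \<le> 1}"
  have lift: "step_lift N z \<in> S"
    unfolding S_def using step_lift_L2 L2_norm_step_lift[OF N] z by simp
  have "bdd_above ((\<lambda>\<psi>. L2_norm (step_diff_op N K1 K2 \<psi>)) ` S)"
  proof (rule bdd_aboveI2)
    fix \<psi> assume "\<psi> \<in> S"
    have "sqrt (sqnorm N (mat_vec N (\<lambda>I J. K1 I J - K2 I J) z')) \<le> sqrt (hs_sq N (\<lambda>I J. K1 I J - K2 I J))"
      if "sqnorm N z' \<le> 1" for z'
    proof -
      have "sqnorm N (mat_vec N (\<lambda>I J. K1 I J - K2 I J) z') \<le> hs_sq N (\<lambda>I J. K1 I J - K2 I J) * sqnorm N z'"
        by (rule sqnorm_mat_vec_le)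
      also have "\<dots> \<le> hs_sq N (\<lambda>I J. K1 I J - K2 I J)"
        using that by (intro mult_left_le) (auto simp: hs_sq_def sum_nonneg)
      finally show ?thesis
        by simp
    qed
    thus "L2_norm (step_diff_op N K1 K2 \<psi>) \<le> sqrt (hs_sq N (\<lambda>I J. K1 I J - K2 I J))"
      using \<open>\<psi> \<in> S\<close> unfolding S_def by (intro L2_norm_step_diff_op_le[OF N]) auto
  qed
  hence "L2_norm (step_diff_op N K1 K2 (step_lift N z)) \<le> L2_opnorm (step_diff_op N K1 K2)"
    unfolding L2_opnorm_def S_def[symmetric] by (rule cSUP_upper[OF lift])
  moreover have "mat_vec N (\<lambda>I J. K1 I J - K2 I J) (\<lambda>J. sqrt N * cell_integral N (step_lift N z) J) =
      mat_vec N (\<lambda>I J. K1 I J - K2 I J) z"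
    by (rule mat_vec_cong) (simp add: cell_integral_step_lift)
  ultimately show ?thesis
    unfolding L2_norm_step_diff_op[OF step_lift_L2 N] by simp
qed

lemma L2_opnorm_step_diff_op_nonneg: "0 < N \<Longrightarrow> 0 \<le> L2_opnorm (step_diff_op N K1 K2)"
  using L2_opnorm_step_diff_op_ge[of N "\<lambda>_. 0" K1 K2] by (simp add: sqnorm_def mat_vec_def)

section \<open>Refining the partition of \<open>[0,1]\<close>\<close>

lemma div_eq_of_mem_block: "0 < m \<Longrightarrow> I \<in> {i*m..<i*m+m} \<Longrightarrow> I div m = (i::nat)"
  by (intro div_nat_eqI) (auto simp: mult.commute)

lemma part_int_refine:
  assumes n: "0 < n" and m: "0 < m"
  shows "part_int n i = (\<Union>I\<in>{i*m..<i*m+m}. part_int (n*m) I)"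
proof -
  have N: "0 < n * m"
    using n m by simp
  have mem: "u \<in> part_int n i \<longleftrightarrow> real (i*m) \<le> u * real (n*m) \<and> u * real (n*m) < real (i*m) + m"
    for u
  proof -
    have "u \<in> part_int n i \<longleftrightarrow> real i * m \<le> u * n * m \<and> u * n * m < (real i + 1) * m"
      using mem_part_int_iff[OF n] m by simp
    thus ?thesis
      by (simp add: algebra_simps)
  qed
  show ?thesis
  proof (intro equalityI subsetI)
    fix u assume "u \<in> part_int n i"
    hence lo: "real (i*m) \<le> u * real (n*m)" and hi: "u * real (n*m) < real (i*m) + m"
      using mem by auto
    define I0 where "I0 = nat \<lfloor>u * real (n*m)\<rfloor>"
    have "0 \<le> u * real (n*m)"
      by (rule order_trans[OF _ lo]) simp
    hence "0 \<le> \<lfloor>u * real (n*m)\<rfloor>"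
      by simp
    hence I0: "real I0 = of_int \<lfloor>u * real (n*m)\<rfloor>"
      unfolding I0_def by simp
    have "u \<in> part_int (n*m) I0"
      unfolding mem_part_int_iff[OF N] I0 by linarith
    moreover have "int (i*m) \<le> \<lfloor>u * real (n*m)\<rfloor>"
      using lo by (simp add: le_floor_iff)
    hence "i*m \<le> I0"
      unfolding I0_def by linarith
    moreover have "\<lfloor>u * real (n*m)\<rfloor> < int (i*m + m)"
      using hi by (simp add: floor_less_iff)
    hence "I0 < i*m + m"
      unfolding I0_def using \<open>0 \<le> \<lfloor>u * real (n*m)\<rfloor>\<close> by (metis nat_less_iff)
    ultimately show "u \<in> (\<Union>I\<in>{i*m..<i*m+m}. part_int (n*m) I)"
      by auto
  next
    fix u assume "u \<in> (\<Union>I\<in>{i*m..<i*m+m}. part_int (n*m) I)"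
    then obtain I where I: "i*m \<le> I" "I + 1 \<le> i*m + m" and "u \<in> part_int (n*m) I"
      by auto
    hence "real I \<le> u * real (n*m)" "u * real (n*m) < real I + 1"
      using mem_part_int_iff[OF N] by auto
    moreover have "real (i*m) \<le> real I" "real I + 1 \<le> real (i*m) + m"
      using I by linarith+
    ultimately show "u \<in> part_int n i"
      unfolding mem by linarith
  qed
qed

lemma sum_cell_ind_refine:
  assumes "0 < n" and "0 < m"
  shows "(\<Sum>I\<in>{i*m..<i*m+m}. cell_ind (n*m) I u) = cell_ind n i u"
  unfolding part_int_refine[OF assms, of i]
  by (rule indicator_UN_disjoint[OF _ disjoint_family_part_int, symmetric]) simp

lemma step_graphon_cong:
  "(\<And>i j. i < n \<Longrightarrow> j < n \<Longrightarrow> B i j = B' i j) \<Longrightarrow> step_graphon n B = step_graphon n B'"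
  unfolding step_graphon_def by (intro ext sum.cong refl) auto

lemma step_graphon_refine:
  assumes n: "0 < n" and m: "0 < m"
  shows "step_graphon n B = step_graphon (n*m) (\<lambda>I J. B (I div m) (J div m))"
proof (intro ext)
  fix u v
  have block_sum: "(\<Sum>I<n*m. g (I div m) * cell_ind (n*m) I x) = (\<Sum>i<n. g i * cell_ind n i x)"
    for g :: "nat \<Rightarrow> real" and x
  proof -
    have "(\<Sum>I<n*m. g (I div m) * cell_ind (n*m) I x) =
        (\<Sum>i<n. \<Sum>I\<in>{i*m..<i*m+m}. g (I div m) * cell_ind (n*m) I x)"
      by (rule sum.nat_group[symmetric])
    also have "\<dots> = (\<Sum>i<n. \<Sum>I\<in>{i*m..<i*m+m}. g i * cell_ind (n*m) I x)"
      using div_eq_of_mem_block[OF m] by (intro sum.cong refl) auto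
    also have "\<dots> = (\<Sum>i<n. g i * cell_ind n i x)"
      by (simp add: sum_distrib_left[symmetric] sum_cell_ind_refine[OF n m])
    finally show ?thesis .
  qed
  have "step_graphon (n*m) (\<lambda>I J. B (I div m) (J div m)) u v =
      (\<Sum>I<n*m. (\<Sum>J<n*m. B (I div m) (J div m) * cell_ind (n*m) J v) * cell_ind (n*m) I u)"
    unfolding step_graphon_def sum_distrib_right by (intro sum.cong refl) (simp only: ac_simps)
  also have "\<dots> = (\<Sum>i<n. (\<Sum>j<n. B i j * cell_ind n j v) * cell_ind n i u)"
    by (simp only: block_sum[where g = "\<lambda>j. B _ j"] block_sum[where g = "\<lambda>i. \<Sum>j<n. B i j * _ j"])
  also have "\<dots> = step_graphon n B u v"
    unfolding step_graphon_def sum_distrib_right by (intro sum.cong refl) (simp only: ac_simps)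
  finally show "step_graphon n B u v = step_graphon (n*m) (\<lambda>I J. B (I div m) (J div m)) u v" ..
qed

definition refine_cols :: "nat \<Rightarrow> (nat \<Rightarrow> nat \<Rightarrow> real) \<Rightarrow> nat \<Rightarrow> nat \<Rightarrow> real" where
  "refine_cols m U = (\<lambda>k I. U (I div m) k / sqrt m)"

lemma orthonormal_fam_refine_cols:
  assumes m: "0 < m"
    and U: "\<And>k k'. k < n \<Longrightarrow> k' < n \<Longrightarrow> (\<Sum>i<n. U i k * U i k') = (if k = k' then 1 else 0)"
  shows "orthonormal_fam (n*m) n (refine_cols m U)"
  unfolding orthonormal_fam_def
proof (intro allI impI)
  fix k k' assume k: "k < n" and k': "k' < n"
  have "vdot (n*m) (refine_cols m U k) (refine_cols m U k') =
      (\<Sum>I<n*m. U (I div m) k * U (I div m) k' / m)"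
    unfolding vdot_def refine_cols_def using m by (simp add: field_simps)
  also have "\<dots> = (\<Sum>i<n. \<Sum>I\<in>{i*m..<i*m+m}. U (I div m) k * U (I div m) k' / m)"
    by (rule sum.nat_group[symmetric])
  also have "\<dots> = (\<Sum>i<n. \<Sum>I\<in>{i*m..<i*m+m}. U i k * U i k' / m)"
    using div_eq_of_mem_block[OF m] by (intro sum.cong refl) auto
  also have "\<dots> = (\<Sum>i<n. U i k * U i k')"
    using m by simp
  finally show "vdot (n*m) (refine_cols m U k) (refine_cols m U k') = (if k = k' then 1 else 0)"
    using U[OF k k'] by simp
qed

lemma step_graphon_spec_sum_refine:
  assumes n: "0 < n" and m: "0 < m"
    and B: "\<And>i j. i < n \<Longrightarrow> j < n \<Longrightarrow> B i j = real n * (\<Sum>k<n. a k * U i k * U j k)"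
  shows "step_graphon n B = step_graphon (n*m) (\<lambda>I J. real (n*m) * spec_sum n a (refine_cols m U) I J)"
  unfolding step_graphon_refine[OF n m]
proof (rule step_graphon_cong)
  fix I J assume "I < n * m" "J < n * m"
  hence "I div m < n" "J div m < n"
    by (simp_all add: less_mult_imp_div_less)
  hence "B (I div m) (J div m) = real n * (\<Sum>k<n. a k * U (I div m) k * U (J div m) k)"
    using B by simp
  also have "\<dots> = real (n * m) * spec_sum n a (refine_cols m U) I J"
    unfolding spec_sum_def refine_cols_def using m
    by (simp add: sum_distrib_left field_simps)
  finally show "B (I div m) (J div m) = real (n * m) * spec_sum n a (refine_cols m U) I J" .
qed

section \<open>Eigenvalues of the graph shift operators\<close>

lemma mat_fun_spectral:
  assumes "sym_mat n B"
  shows "\<exists>U lam. orth_eigendecomp n B U lam \<and>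
     (\<forall>f. mat_fun f n B = (\<lambda>i j. if i < n \<and> j < n then (\<Sum>k<n. f (lam k) * U i k * U j k) else 0))"
proof -
  define P where "P = (\<lambda>(U, lam). orth_eigendecomp n B U lam)"
  have "\<exists>d. P d"
    using sym_mat_orth_eigendecomp[OF assms] unfolding P_def by auto
  hence "P (SOME d. P d)"
    by (rule someI_ex)
  moreover obtain U lam where d: "(SOME d. P d) = (U, lam)"
    by (cases "SOME d. P d") auto
  ultimately have "orth_eigendecomp n B U lam"
    unfolding P_def by simp
  moreover have "mat_fun f n B = (\<lambda>i j. if i < n \<and> j < n then (\<Sum>k<n. f (lam k) * U i k * U j k) else 0)"
    for f
    using d unfolding mat_fun_def P_def by simp
  ultimately show ?thesis
    by blast
qed

lemma orth_eigendecomp_eigenvector: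
  assumes od: "orth_eigendecomp n B U lam" and k: "k < n"
  shows "(\<Sum>i<n. (U i k)\<^sup>2) = 1" and "\<And>i. i < n \<Longrightarrow> (\<Sum>j<n. B i j * U j k) = lam k * U i k"
proof -
  have ortho: "\<And>i j. i < n \<Longrightarrow> j < n \<Longrightarrow> (\<Sum>p<n. U p i * U p j) = (if i = j then 1 else 0)"
    and dec: "\<And>i j. i < n \<Longrightarrow> j < n \<Longrightarrow> B i j = (\<Sum>p<n. lam p * U i p * U j p)"
    using od unfolding orth_eigendecomp_def by auto
  show "(\<Sum>i<n. (U i k)\<^sup>2) = 1"
    using ortho[OF k k] by (simp add: power2_eq_square)
  fix i assume i: "i < n"
  have "(\<Sum>j<n. B i j * U j k) = (\<Sum>j<n. \<Sum>p<n. lam p * U i p * (U j p * U j k))"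
    using dec[OF i] by (simp add: sum_distrib_right mult.assoc)
  also have "\<dots> = (\<Sum>p<n. lam p * U i p * (\<Sum>j<n. U j p * U j k))"
    by (subst sum.swap) (simp add: sum_distrib_left)
  also have "\<dots> = (\<Sum>p<n. lam p * U i p * (if p = k then 1 else 0))"
    using ortho k by (intro sum.cong refl) simp
  also have "\<dots> = lam k * U i k"
    using k by (rule sum_delta_mult_right)
  finally show "(\<Sum>j<n. B i j * U j k) = lam k * U i k" .
qed

lemma perm_mat_eigenvector:
  assumes pi: "\<pi> permutes {..<n}"
    and ev: "\<forall>i<n. (\<Sum>j<n. perm_mat \<pi> B i j * x j) = c * x i"
  shows "(\<Sum>a<n. (x (inv_into UNIV \<pi> a))\<^sup>2) = (\<Sum>i<n. (x i)\<^sup>2)"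
    and "\<And>a. a < n \<Longrightarrow> (\<Sum>j<n. B a j * x (inv_into UNIV \<pi> j)) = c * x (inv_into UNIV \<pi> a)"
proof -
  have inv_pi: "inv_into UNIV \<pi> permutes {..<n}"
    using pi by (rule permutes_inv)
  show "(\<Sum>a<n. (x (inv_into UNIV \<pi> a))\<^sup>2) = (\<Sum>i<n. (x i)\<^sup>2)"
    using sum.permute[OF inv_pi, of "\<lambda>i. (x i)\<^sup>2"] by (simp add: comp_def)
  fix a assume a: "a < n"
  have i: "inv_into UNIV \<pi> a < n"
    using permutes_in_image[OF inv_pi] a by simp
  have "(\<Sum>j<n. B a j * x (inv_into UNIV \<pi> j)) = (\<Sum>j<n. B a (\<pi> j) * x (inv_into UNIV \<pi> (\<pi> j)))"
    using sum.permute[OF pi, of "\<lambda>j. B a j * x (inv_into UNIV \<pi> j)"] by (simp add: comp_def)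
  also have "\<dots> = (\<Sum>j<n. perm_mat \<pi> B (inv_into UNIV \<pi> a) j * x j)"
    unfolding perm_mat_def using permutes_inverses[OF pi] by simp
  also have "\<dots> = c * x (inv_into UNIV \<pi> a)"
    using ev i by blast
  finally show "(\<Sum>j<n. B a j * x (inv_into UNIV \<pi> j)) = c * x (inv_into UNIV \<pi> a)" .
qed

lemma mat_opnorm_bdd_above:
  "bdd_above ((\<lambda>x. sqrt (\<Sum>i<n. (cmod (\<Sum>j<n. complex_of_real (B i j) * x j))\<^sup>2)) `
     {x :: nat \<Rightarrow> complex. (\<Sum>i<n. (cmod (x i))\<^sup>2) \<le> 1})"
proof (rule bdd_aboveI2)
  fix x :: "nat \<Rightarrow> complex" assume "x \<in> {x :: nat \<Rightarrow> complex. (\<Sum>i<n. (cmod (x i))\<^sup>2) \<le> 1}"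
  hence "(cmod (x j))\<^sup>2 \<le> 1" if "j < n" for j
    using member_le_sum[of j "{..<n}" "\<lambda>i. (cmod (x i))\<^sup>2"] that by auto
  hence x: "cmod (x j) \<le> 1" if "j < n" for j
    using that by (simp add: power_le_one_iff)
  have "cmod (\<Sum>j<n. complex_of_real (B i j) * x j) \<le> (\<Sum>j<n. \<bar>B i j\<bar>)" for i
  proof -
    have "cmod (\<Sum>j<n. complex_of_real (B i j) * x j) \<le> (\<Sum>j<n. cmod (complex_of_real (B i j) * x j))"
      by (rule norm_sum)
    also have "\<dots> \<le> (\<Sum>j<n. \<bar>B i j\<bar>)"
      using x by (intro sum_mono) (simp add: norm_mult mult_left_le)
    finally show ?thesis .
  qed
  hence "(\<Sum>i<n. (cmod (\<Sum>j<n. complex_of_real (B i j) * x j))\<^sup>2) \<le> (\<Sum>i<n. (\<Sum>j<n. \<bar>B i j\<bar>)\<^sup>2)"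
    by (intro sum_mono power_mono) auto
  thus "sqrt (\<Sum>i<n. (cmod (\<Sum>j<n. complex_of_real (B i j) * x j))\<^sup>2)
      \<le> sqrt (\<Sum>i<n. (\<Sum>j<n. \<bar>B i j\<bar>)\<^sup>2)"
    by simp
qed

lemma mat_opnorm_ge_eigenvalue:
  assumes y: "(\<Sum>i<n. (y i)\<^sup>2) = 1" and ev: "\<And>i. i < n \<Longrightarrow> (\<Sum>j<n. B i j * y j) = c * y i"
  shows "\<bar>c\<bar> \<le> mat_opnorm n B"
proof -
  define yc where "yc j = complex_of_real (y j)" for j
  have "cmod (\<Sum>j<n. complex_of_real (B i j) * yc j) = \<bar>c * y i\<bar>" if "i < n" for i
  proof -
    have "(\<Sum>j<n. complex_of_real (B i j) * yc j) = complex_of_real (\<Sum>j<n. B i j * y j)"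
      unfolding yc_def by simp
    thus ?thesis
      using ev[OF that] by (simp only: norm_of_real)
  qed
  hence "sqrt (\<Sum>i<n. (cmod (\<Sum>j<n. complex_of_real (B i j) * yc j))\<^sup>2) = sqrt (c\<^sup>2 * (\<Sum>i<n. (y i)\<^sup>2))"
    by (simp add: power2_abs power_mult_distrib sum_distrib_left)
  also have "\<dots> = \<bar>c\<bar>"
    using y by simp
  finally have "\<bar>c\<bar> = sqrt (\<Sum>i<n. (cmod (\<Sum>j<n. complex_of_real (B i j) * yc j))\<^sup>2)" ..
  also have "\<dots> \<le> mat_opnorm n B"
    unfolding mat_opnorm_def using y
    by (intro cSUP_upper[OF _ mat_opnorm_bdd_above]) (simp add: yc_def)
  finally show ?thesis .
qed

lemma perm_eigenvalue_le_mat_opnorm: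
  assumes pi: "\<pi> permutes {..<n}" and od: "orth_eigendecomp n (perm_mat \<pi> \<Delta>) U lam" and k: "k < n"
  shows "\<bar>real n * lam k\<bar> \<le> mat_opnorm n (scale_mat n \<Delta>)"
proof (rule mat_opnorm_ge_eigenvalue)
  have "\<forall>i<n. (\<Sum>j<n. perm_mat \<pi> \<Delta> i j * U j k) = lam k * U i k"
    using orth_eigendecomp_eigenvector(2)[OF od k] by blast
  note eigvec = perm_mat_eigenvector[OF pi this]
  show "(\<Sum>i<n. (U (inv_into UNIV \<pi> i) k)\<^sup>2) = 1"
    using eigvec(1) orth_eigendecomp_eigenvector(1)[OF od k] by simp
  show "(\<Sum>j<n. scale_mat n \<Delta> i j * U (inv_into UNIV \<pi> j) k) = real n * lam k * U (inv_into UNIV \<pi> i) k" if "i < n" for i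
    using eigvec(2)[OF that] unfolding scale_mat_def by (simp add: sum_distrib_left[symmetric] mult.assoc)
qed

lemma scaled_eigenvalue_bounds:
  fixes lam :: "nat \<Rightarrow> real"
  assumes b: "\<And>k. k < n \<Longrightarrow> \<bar>real n * lam k\<bar> \<le> G"
  shows "(\<Sum>k<n. (lam k)\<^sup>2) \<le> G\<^sup>2" and "\<And>k. k < n \<Longrightarrow> lam k \<in> {-G..G}"
proof -
  show "lam k \<in> {-G..G}" if k: "k < n" for k
  proof -
    have "\<bar>lam k\<bar> \<le> \<bar>real n * lam k\<bar>"
      using k by (simp add: abs_mult mult_le_cancel_right1)
    thus ?thesis
      using b[OF k] by auto
  qed
  show "(\<Sum>k<n. (lam k)\<^sup>2) \<le> G\<^sup>2"
  proof (cases "n = 0")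
    case False
    hence n: "1 \<le> real n"
      by simp
    have "(real n)\<^sup>2 * (\<Sum>k<n. (lam k)\<^sup>2) = (\<Sum>k<n. (real n * lam k)\<^sup>2)"
      by (simp add: sum_distrib_left power_mult_distrib)
    also have "\<dots> \<le> (\<Sum>k<n. G\<^sup>2)"
      using b by (intro sum_mono) (metis abs_ge_zero lessThan_iff power2_abs power_mono)
    also have "\<dots> = real n * G\<^sup>2"
      by simp
    also have "\<dots> \<le> (real n)\<^sup>2 * G\<^sup>2"
      using n by (intro mult_right_mono) (auto simp: power2_eq_square)
    finally show ?thesis
      using n by simp
  qed simp
qed

section \<open>The estimate for the graphon operators\<close>

lemma step_graphon_spectral_refinement:
  assumes sym: "sym_mat n \<Delta>" and pi: "\<pi> permutes {..<n}"
    and opn: "mat_opnorm n (scale_mat (real n) \<Delta>) \<le> G"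
    and m: "0 < m" and N: "N = max n 1 * m"
  obtains u lam where "orthonormal_fam N n u"
    and "(\<Sum>k<n. (lam k)\<^sup>2) \<le> G\<^sup>2" and "\<And>k. k < n \<Longrightarrow> lam k \<in> {-G..G}"
    and "\<And>f. step_graphon n (scale_mat (real n) (mat_fun f n (perm_mat \<pi> \<Delta>))) =
              step_graphon N (\<lambda>I J. real N * spec_sum n (\<lambda>k. f (lam k)) u I J)"
    and "step_graphon n (perm_mat \<pi> (scale_mat (real n) \<Delta>)) =
           step_graphon N (\<lambda>I J. real N * spec_sum n lam u I J)"
proof -
  have "sym_mat n (perm_mat \<pi> \<Delta>)"
    using sym permutes_in_image[OF pi] unfolding sym_mat_def perm_mat_def by auto
  then obtain U lam where od: "orth_eigendecomp n (perm_mat \<pi> \<Delta>) U lam"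
    and mf: "\<And>f. mat_fun f n (perm_mat \<pi> \<Delta>) =
               (\<lambda>i j. if i < n \<and> j < n then (\<Sum>k<n. f (lam k) * U i k * U j k) else 0)"
    using mat_fun_spectral by blast
  have "\<And>k. k < n \<Longrightarrow> \<bar>real n * lam k\<bar> \<le> G"
    using perm_eigenvalue_le_mat_opnorm[OF pi od] opn by fastforce
  note lam_bounds = scaled_eigenvalue_bounds[of n lam G, OF this]
  show thesis
  proof (cases "n = 0")
    case True
    thus thesis
      using lam_bounds by (intro that[of U lam])
        (simp_all add: orthonormal_fam_def step_graphon_def spec_sum_def fun_eq_iff)
  next
    case False
    hence n: "0 < n" and N': "N = n * m"
      using N by auto
    have dec: "perm_mat \<pi> \<Delta> i j = (\<Sum>k<n. lam k * U i k * U j k)" if "i < n" "j < n" for i j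
      using od that unfolding orth_eigendecomp_def by blast
    show thesis
    proof (rule that[of "refine_cols m U" lam])
      show "orthonormal_fam N n (refine_cols m U)"
        unfolding N' using od by (intro orthonormal_fam_refine_cols[OF m]) (auto simp: orth_eigendecomp_def)
      show "step_graphon n (scale_mat (real n) (mat_fun f n (perm_mat \<pi> \<Delta>))) =
          step_graphon N (\<lambda>I J. real N * spec_sum n (\<lambda>k. f (lam k)) (refine_cols m U) I J)" for f
        unfolding N' by (rule step_graphon_spec_sum_refine[OF n m]) (simp add: scale_mat_def mf)
      show "step_graphon n (perm_mat \<pi> (scale_mat (real n) \<Delta>)) =
          step_graphon N (\<lambda>I J. real N * spec_sum n lam (refine_cols m U) I J)"
        unfolding N' using dec
        by (intro step_graphon_spec_sum_refine[OF n m]) (simp add: scale_mat_def perm_mat_def)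
    qed (use lam_bounds in auto)
  qed
qed

lemma step_diff_op_spec_sum_fun_le:
  fixes f :: "real \<Rightarrow> real" and lam mu :: "nat \<Rightarrow> real"
  assumes N: "0 < N" and ou: "orthonormal_fam N p u" and ov: "orthonormal_fam N q v"
    and "0 \<le> L" and "0 \<le> G"
    and lamG: "(\<Sum>k<p. (lam k)\<^sup>2) \<le> G\<^sup>2" and muG: "(\<Sum>l<q. (mu l)\<^sup>2) \<le> G\<^sup>2"
    and f: "\<And>x y. x \<in> S \<Longrightarrow> y \<in> S \<Longrightarrow>
      \<bar>(f x - c * x) - (f y - c * y)\<bar> \<le> L * max \<bar>x\<bar> \<bar>y\<bar> * \<bar>x - y\<bar>"
    and "0 \<in> S" and "f 0 = 0"
    and lamS: "\<And>k. k < p \<Longrightarrow> lam k \<in> S" and muS: "\<And>l. l < q \<Longrightarrow> mu l \<in> S"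
  shows "L2_opnorm (step_diff_op N (spec_sum p (\<lambda>k. f (lam k)) u) (spec_sum q (\<lambda>l. f (mu l)) v))
         \<le> (\<bar>c\<bar> + 2 * L * G) * L2_opnorm (step_diff_op N (spec_sum p lam u) (spec_sum q mu v))"
    (is "_ \<le> _ * ?rho")
proof (rule L2_opnorm_step_diff_op_le[OF N])
  have rho: "sqnorm N (mat_vec N (\<lambda>I J. spec_sum p lam u I J - spec_sum q mu v I J) z) \<le> ?rho\<^sup>2"
    if "sqnorm N z \<le> 1" for z
    by (rule sqrt_le_D[OF L2_opnorm_step_diff_op_ge[OF N that]])
  fix z assume "sqnorm N z \<le> 1"
  thus "sqrt (sqnorm N (mat_vec N
      (\<lambda>I J. spec_sum p (\<lambda>k. f (lam k)) u I J - spec_sum q (\<lambda>l. f (mu l)) v I J) z))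
      \<le> (\<bar>c\<bar> + 2 * L * G) * ?rho"
    using spec_sum_fun_diff_bound[OF ou ov rho L2_opnorm_step_diff_op_nonneg[OF N] assms(4,5) lamG muG f
        \<open>0 \<in> S\<close> \<open>f 0 = 0\<close> lamS muS] by blast
qed

lemma lipschitz_deriv_remainder:
  fixes h h' :: "real \<Rightarrow> real"
  assumes der: "\<forall>x \<in> {-G..G}. (h has_real_derivative h' x) (at x within {-G..G})"
    and lip: "L-lipschitz_on {-G..G} h'"
    and x: "x \<in> {-G..G}" and y: "y \<in> {-G..G}"
  shows "\<bar>(h x - h' 0 * x) - (h y - h' 0 * y)\<bar> \<le> L * max \<bar>x\<bar> \<bar>y\<bar> * \<bar>x - y\<bar>"
proof -
  define S where "S = {min x y .. max x y}"
  have SG: "S \<subseteq> {-G..G}"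
    unfolding S_def using x y by auto
  have "norm ((\<lambda>t. h t - h' 0 * t) x - (\<lambda>t. h t - h' 0 * t) y) \<le> (L * max \<bar>x\<bar> \<bar>y\<bar>) * norm (x - y)"
  proof (rule field_differentiable_bound[of S _ "\<lambda>z. h' z - h' 0"])
    show "convex S"
      unfolding S_def by (rule convex_real_interval)
    fix z assume z: "z \<in> S"
    have "(h has_field_derivative h' z) (at z within S)"
      using der SG z by (auto intro: DERIV_subset)
    thus "((\<lambda>t. h t - h' 0 * t) has_field_derivative h' z - h' 0) (at z within S)"
      by (auto intro!: derivative_eq_intros)
    have "norm (h' z - h' 0) \<le> L * norm (z - 0)"
      using SG z x by (intro lipschitz_on_normD[OF lip]) auto
    also have "\<dots> \<le> L * max \<bar>x\<bar> \<bar>y\<bar>"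
      using z lipschitz_on_nonneg[OF lip] unfolding S_def by (intro mult_left_mono) auto
    finally show "norm (h' z - h' 0) \<le> L * max \<bar>x\<bar> \<bar>y\<bar>" .
  qed (auto simp: S_def)
  thus ?thesis
    by simp
qed

lemma graphon_fun_diff_le:
  fixes h h' :: "real \<Rightarrow> real" and \<Delta>1 \<Delta>2 :: "nat \<Rightarrow> nat \<Rightarrow> real"
  assumes der: "\<forall>x \<in> {-G..G}. (h has_real_derivative h' x) (at x within {-G..G})"
    and lip: "L-lipschitz_on {-G..G} h'" and h0: "h 0 = 0"
    and "0 \<le> G" and C: "\<bar>h' 0\<bar> + 2 * L * G \<le> C"
    and sym: "sym_mat n1 \<Delta>1" "sym_mat n2 \<Delta>2"
    and opn: "mat_opnorm n1 (scale_mat (real n1) \<Delta>1) \<le> G" "mat_opnorm n2 (scale_mat (real n2) \<Delta>2) \<le> G"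
    and pi: "\<pi>1 permutes {..<n1}" "\<pi>2 permutes {..<n2}"
  shows "L2_opnorm (op_diff
           (int_op (step_graphon n1 (scale_mat (real n1) (mat_fun h n1 (perm_mat \<pi>1 \<Delta>1)))))
           (int_op (step_graphon n2 (scale_mat (real n2) (mat_fun h n2 (perm_mat \<pi>2 \<Delta>2))))))
         \<le> C * L2_opnorm (op_diff
           (int_op (step_graphon n1 (perm_mat \<pi>1 (scale_mat (real n1) \<Delta>1))))
           (int_op (step_graphon n2 (perm_mat \<pi>2 (scale_mat (real n2) \<Delta>2)))))"
proof -
  define N where "N = max n1 1 * max n2 1"
  have m: "0 < max n1 1" "0 < max n2 1"
    by simp_all
  hence N: "0 < N"
    unfolding N_def by simp
  obtain u lam where u: "orthonormal_fam N n1 u" "(\<Sum>k<n1. (lam k)\<^sup>2) \<le> G\<^sup>2"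
      "\<And>k. k < n1 \<Longrightarrow> lam k \<in> {-G..G}"
    and lift1: "\<And>f. step_graphon n1 (scale_mat (real n1) (mat_fun f n1 (perm_mat \<pi>1 \<Delta>1))) =
        step_graphon N (\<lambda>I J. real N * spec_sum n1 (\<lambda>k. f (lam k)) u I J)"
      "step_graphon n1 (perm_mat \<pi>1 (scale_mat (real n1) \<Delta>1)) =
        step_graphon N (\<lambda>I J. real N * spec_sum n1 lam u I J)"
    using step_graphon_spectral_refinement[OF sym(1) pi(1) opn(1) m(2) N_def] by blast
  obtain v mu where v: "orthonormal_fam N n2 v" "(\<Sum>l<n2. (mu l)\<^sup>2) \<le> G\<^sup>2"
      "\<And>l. l < n2 \<Longrightarrow> mu l \<in> {-G..G}"
    and lift2: "\<And>f. step_graphon n2 (scale_mat (real n2) (mat_fun f n2 (perm_mat \<pi>2 \<Delta>2))) =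
        step_graphon N (\<lambda>I J. real N * spec_sum n2 (\<lambda>l. f (mu l)) v I J)"
      "step_graphon n2 (perm_mat \<pi>2 (scale_mat (real n2) \<Delta>2)) =
        step_graphon N (\<lambda>I J. real N * spec_sum n2 mu v I J)"
    using step_graphon_spectral_refinement[OF sym(2) pi(2) opn(2) m(1)] N_def mult.commute
    by blast
  show ?thesis
    unfolding lift1 lift2 step_diff_op_def[symmetric]
    by (rule order_trans[OF step_diff_op_spec_sum_fun_le[OF N u(1) v(1) lipschitz_on_nonneg[OF lip]
          \<open>0 \<le> G\<close> u(2) v(2) lipschitz_deriv_remainder[OF der lip] _ h0 u(3) v(3)]])
      (use \<open>0 \<le> G\<close> in \<open>auto intro!: mult_right_mono L2_opnorm_step_diff_op_nonneg[OF N] C\<close>)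
qed

theorem theorem5p6:
  fixes \<Gamma> :: nat and h :: "real \<Rightarrow> real"
  assumes h_C1: "\<exists>h' L. (\<forall>x \<in> {-real \<Gamma>..real \<Gamma>}.
                     (h has_real_derivative h' x) (at x within {-real \<Gamma>..real \<Gamma>}))
                   \<and> L-lipschitz_on {-real \<Gamma>..real \<Gamma>} h'"
    and h0: "h 0 = 0"
  shows "\<exists>C>0. \<forall>n1 n2 (\<Delta>1 :: nat \<Rightarrow> nat \<Rightarrow> real) (\<Delta>2 :: nat \<Rightarrow> nat \<Rightarrow> real) \<pi>1 \<pi>2.
           sym_mat n1 \<Delta>1 \<longrightarrow> sym_mat n2 \<Delta>2 \<longrightarrow>
           mat_opnorm n1 (scale_mat (real n1) \<Delta>1) \<le> real \<Gamma> \<longrightarrow>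
           mat_opnorm n2 (scale_mat (real n2) \<Delta>2) \<le> real \<Gamma> \<longrightarrow>
           \<pi>1 permutes {..<n1} \<longrightarrow> \<pi>2 permutes {..<n2} \<longrightarrow>
           L2_opnorm (op_diff
              (int_op (step_graphon n1 (scale_mat (real n1) (mat_fun h n1 (perm_mat \<pi>1 \<Delta>1)))))
              (int_op (step_graphon n2 (scale_mat (real n2) (mat_fun h n2 (perm_mat \<pi>2 \<Delta>2))))))
           \<le> C * L2_opnorm (op_diff
              (int_op (step_graphon n1 (perm_mat \<pi>1 (scale_mat (real n1) \<Delta>1))))
              (int_op (step_graphon n2 (perm_mat \<pi>2 (scale_mat (real n2) \<Delta>2)))))"
proof -
  obtain h' L where der: "\<forall>x \<in> {-real \<Gamma>..real \<Gamma>}.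
      (h has_real_derivative h' x) (at x within {-real \<Gamma>..real \<Gamma>})"
    and lip: "L-lipschitz_on {-real \<Gamma>..real \<Gamma>} h'"
    using h_C1 by blast
  show ?thesis
  proof (intro exI[of _ "\<bar>h' 0\<bar> + 2 * L * real \<Gamma> + 1"] conjI allI impI)
    show "0 < \<bar>h' 0\<bar> + 2 * L * real \<Gamma> + 1"
      using lipschitz_on_nonneg[OF lip] by (simp add: add_nonneg_pos)
  qed (rule graphon_fun_diff_le[OF der lip h0]; simp)
qed

end
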